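(* Assume the standing hypotheses below, including $(A_c^+)$, and suppose moreover that $c^-\equiv0$ and that $(P_0)$ has a solution $u_0$ with $c^+u_0\gneqq0$. Then there exists $\bar\lambda\in(0,\infty)$ such that for every $\lambda\ge\bar\lambda$, problem $(P_\lambda)$ has no solution $u$ with $u\ge u_0$ in $\Omega$.
   Context: Standing hypotheses: $\Omega\subset\mathbb R^n$, $n\ge3$, is a bounded domain with boundary of class $C^{1,\mathrm{Dini}}$. $A(x)=(a_{ij}(x))$ is a symmetric matrix with entries in $C^{0,\mathrm{Dini}}(\overline\Omega)$ and $\vartheta I_n\le A(x)\le\vartheta^{-1}I_n$ for some $\vartheta>0$. $M(x)$ is a measurable symmetric matrix with $0<\mu_1I_n\le M(x)\le\mu_2I_n$ in $\Omega$. $c,h\in L^p(\Omega)$ for some $p>n$; $c^+=\max(c,0)$, $c^-=\max(-c,0)$, and $c_\lambda(x):=\lambda c^+(x)-c^-(x)$. Hypothesis $(A_c^+)$: $\Omega_{c^+}:=\operatorname{supp}(c^+)$ has $|\Omega_{c^+}|>0$, and there is $\varepsilon>0$ such that $c^-=0$ a.e. in $\{x\in\Omega: d(x,\Omega_{c^+})<\varepsilon\}$. Problem $(P_\lambda)$: $-\operatorname{div}(A(x)Du)=c_\lambda(x)u+(M(x)Du,Du)+h(x)$, $u\in H_0^1(\Omega)\cap L^\infty(\Omega)$, understood weakly against all $\varphi\in C_0^\infty(\Omega)$. $f\gneqq0$ means $f\ge0$ a.e. and $f\not\equiv0$. *)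

theory Defs
  imports "HOL-Analysis.Analysis"
begin

definition partial_deriv :: "'n::finite \<Rightarrow> (real^'n \<Rightarrow> real) \<Rightarrow> real^'n \<Rightarrow> real" where
  "partial_deriv i f x = frechet_derivative f (at x) (axis i 1)"

definition grad :: "(real^'n::finite \<Rightarrow> real) \<Rightarrow> real^'n \<Rightarrow> real^'n" where
  "grad f x = (\<chi> i. partial_deriv i f x)"

primrec higher_diff :: "nat \<Rightarrow> (real^'n::finite \<Rightarrow> real) \<Rightarrow> bool" where
  "higher_diff 0 f = continuous_on UNIV f"
| "higher_diff (Suc k) f = ((\<forall>x. f differentiable at x) \<and> continuous_on UNIV f
      \<and> (\<forall>i. higher_diff k (partial_deriv i f)))"

definition smooth_fn :: "(real^'n::finite \<Rightarrow> real) \<Rightarrow> bool" where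
  "smooth_fn f \<longleftrightarrow> (\<forall>k. higher_diff k f)"

definition tsupp :: "(real^'n::finite \<Rightarrow> real) \<Rightarrow> (real^'n) set" where
  "tsupp f = closure {x. f x \<noteq> 0}"

definition test_fn :: "(real^'n::finite) set \<Rightarrow> (real^'n \<Rightarrow> real) \<Rightarrow> bool" where
  "test_fn \<Omega> \<phi> \<longleftrightarrow> smooth_fn \<phi> \<and> compact (tsupp \<phi>) \<and> tsupp \<phi> \<subseteq> \<Omega>"

definition modulus :: "('a::metric_space) set \<Rightarrow> ('a \<Rightarrow> 'b::real_normed_vector) \<Rightarrow> real \<Rightarrow> real" where
  "modulus S f t = Sup {norm (f x - f y) | x y. x \<in> S \<and> y \<in> S \<and> dist x y \<le> t}"

definition dini_continuous_on :: "('a::metric_space) set \<Rightarrow> ('a \<Rightarrow> 'b::real_normed_vector) \<Rightarrow> bool" where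
  "dini_continuous_on S f \<longleftrightarrow> continuous_on S f
     \<and> (\<forall>t. bdd_above {norm (f x - f y) | x y. x \<in> S \<and> y \<in> S \<and> dist x y \<le> t})
     \<and> set_integrable lborel {0<..1} (\<lambda>t. modulus S f t / t)"

text \<open>Boundary of class C^{1,Dini}: locally, after choosing a unit direction e, Omega is the
  supergraph {x. x \<bullet> e > gamma(x - (x \<bullet> e) e)} of a C^1 function gamma (on the hyperplane
  orthogonal to e) whose gradient is Dini continuous on bounded sets.\<close>
definition C1_dini_boundary :: "(real^'n::finite) set \<Rightarrow> bool" where
  "C1_dini_boundary \<Omega> \<longleftrightarrow> (\<forall>x0\<in>frontier \<Omega>. \<exists>r>0. \<exists>e \<gamma>. norm e = 1
      \<and> (\<forall>x. \<gamma> differentiable at x)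
      \<and> continuous_on UNIV (grad \<gamma>)
      \<and> (\<forall>R. dini_continuous_on (cball 0 R) (grad \<gamma>))
      \<and> \<Omega> \<inter> ball x0 r = {x \<in> ball x0 r. x \<bullet> e > \<gamma> (x - (x \<bullet> e) *\<^sub>R e)})"

definition Lp :: "real \<Rightarrow> (real^'n::finite) set \<Rightarrow> (real^'n \<Rightarrow> real) \<Rightarrow> bool" where
  "Lp p \<Omega> f \<longleftrightarrow> f \<in> borel_measurable (lebesgue_on \<Omega>)
      \<and> integrable (lebesgue_on \<Omega>) (\<lambda>x. \<bar>f x\<bar> powr p)"

definition Linfty :: "(real^'n::finite) set \<Rightarrow> (real^'n \<Rightarrow> real) \<Rightarrow> bool" where
  "Linfty \<Omega> f \<longleftrightarrow> f \<in> borel_measurable (lebesgue_on \<Omega>)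
      \<and> (\<exists>C. AE x in lebesgue_on \<Omega>. \<bar>f x\<bar> \<le> C)"

text \<open>H01 Omega u g: u belongs to H_0^1(Omega) (closure of C_0^infinity(Omega) in the H^1 norm)
  and g is its (weak) gradient, i.e. the L^2 limit of the gradients of the approximating
  test functions.\<close>
definition H01 :: "(real^'n::finite) set \<Rightarrow> (real^'n \<Rightarrow> real) \<Rightarrow> (real^'n \<Rightarrow> real^'n) \<Rightarrow> bool" where
  "H01 \<Omega> u g \<longleftrightarrow> u \<in> borel_measurable (lebesgue_on \<Omega>)
      \<and> g \<in> borel_measurable (lebesgue_on \<Omega>)
      \<and> integrable (lebesgue_on \<Omega>) (\<lambda>x. (u x)\<^sup>2)
      \<and> integrable (lebesgue_on \<Omega>) (\<lambda>x. (norm (g x))\<^sup>2)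
      \<and> (\<exists>\<phi>. (\<forall>k. test_fn \<Omega> (\<phi> k))
           \<and> (\<lambda>k. integral\<^sup>L (lebesgue_on \<Omega>) (\<lambda>x. (\<phi> k x - u x)\<^sup>2)) \<longlonglongrightarrow> 0
           \<and> (\<lambda>k. integral\<^sup>L (lebesgue_on \<Omega>) (\<lambda>x. (norm (grad (\<phi> k) x - g x))\<^sup>2)) \<longlonglongrightarrow> 0)"

definition pos_part :: "('a \<Rightarrow> real) \<Rightarrow> 'a \<Rightarrow> real" where
  "pos_part c x = max (c x) 0"

definition neg_part :: "('a \<Rightarrow> real) \<Rightarrow> 'a \<Rightarrow> real" where
  "neg_part c x = max (- c x) 0"

definition c_lam :: "real \<Rightarrow> ('a \<Rightarrow> real) \<Rightarrow> 'a \<Rightarrow> real" where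
  "c_lam lam c x = lam * pos_part c x - neg_part c x"

definition is_solution ::
  "(real^'n::finite) set \<Rightarrow> (real^'n \<Rightarrow> real^'n^'n) \<Rightarrow> (real^'n \<Rightarrow> real^'n^'n)
   \<Rightarrow> (real^'n \<Rightarrow> real) \<Rightarrow> (real^'n \<Rightarrow> real) \<Rightarrow> real \<Rightarrow> (real^'n \<Rightarrow> real) \<Rightarrow> bool" where
  "is_solution \<Omega> A M c h lam u \<longleftrightarrow> Linfty \<Omega> u \<and>
     (\<exists>Du. H01 \<Omega> u Du \<and>
        (\<forall>\<phi>. test_fn \<Omega> \<phi> \<longrightarrow>
           integral\<^sup>L (lebesgue_on \<Omega>) (\<lambda>x. (A x *v Du x) \<bullet> grad \<phi> x)
         = integral\<^sup>L (lebesgue_on \<Omega>)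
             (\<lambda>x. (c_lam lam c x * u x + (M x *v Du x) \<bullet> Du x + h x) * \<phi> x)))"

definition ess_supp :: "(real^'n::finite) set \<Rightarrow> (real^'n \<Rightarrow> real) \<Rightarrow> (real^'n) set" where
  "ess_supp \<Omega> f = UNIV - \<Union>{U. open U \<and> (AE x in lebesgue_on (U \<inter> \<Omega>). f x = 0)}"

definition hyp_Ac_plus :: "(real^'n::finite) set \<Rightarrow> (real^'n \<Rightarrow> real) \<Rightarrow> bool" where
  "hyp_Ac_plus \<Omega> c \<longleftrightarrow> emeasure lebesgue (ess_supp \<Omega> (pos_part c)) > 0
     \<and> (\<exists>\<epsilon>>0. AE x in lebesgue_on {x\<in>\<Omega>. infdist x (ess_supp \<Omega> (pos_part c)) < \<epsilon>}.
                 neg_part c x = 0)"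

definition sym_matrix :: "real^'n^'n \<Rightarrow> bool" where
  "sym_matrix B \<longleftrightarrow> transpose B = B"

end

theory Submission
  imports Defs
begin

text \<open>Let \<open>u \<ge> u\<^sub>0\<close> solve \<open>(P\<^sub>\<lambda>)\<close> and put
  \<open>v = u - u\<^sub>0 \<ge> 0\<close>. Subtract the weak equations of \<open>u\<close> and
  \<open>u\<^sub>0\<close> and test with \<open>\<phi>\<^sup>2 F(v)\<close>, where \<open>F(t) = 1 /
  (1 + t + \<surd>(t\<^sup>2 + 1))\<close> (\<open>damping\<close> below) satisfies \<open>F' \<le>
  -F\<^sup>2\<close> on \<open>[0, \<infinity>)\<close>. Since \<open>M Du \<cdot> Du - M Du\<^sub>0
  \<cdot> Du\<^sub>0 \<ge> 2 M Du\<^sub>0 \<cdot> Dv\<close>, the remaining gradient terms are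
  absorbed by \<open>-\<phi>\<^sup>2 F(v)\<^sup>2 A Dv \<cdot> Dv\<close>, and one obtains
  \<open>\<lambda> \<integral> c\<^sup>+ u \<phi>\<^sup>2 F(v) \<le> C\<close> with \<open>C\<close>
  depending only on \<open>\<phi>\<close> and \<open>u\<^sub>0\<close>. As \<open>u F(v) \<ge>
  min(1, u\<^sub>0\<^sup>+) / 2\<close> and \<open>c\<^sup>+ u\<^sub>0 \<noteq> 0\<close>, some
  \<open>\<phi>\<close> makes the integral bounded below by a positive constant, so
  \<open>\<lambda>\<close> is bounded. The test function is justified by approximating
  \<open>v\<close> with smooth functions.\<close>

section \<open>Smooth functions\<close>

lemma partial_deriv_eqI:
  assumes "(f has_derivative f') (at x)"
  shows "partial_deriv i f x = f' (axis i 1)"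
  using frechet_derivative_at[OF assms] unfolding partial_deriv_def by simp

lemma partial_deriv_add:
  "f differentiable at x \<Longrightarrow> g differentiable at x \<Longrightarrow>
   partial_deriv i (\<lambda>x. f x + g x) x = partial_deriv i f x + partial_deriv i g x"
  by (subst partial_deriv_eqI[OF has_derivative_add[OF frechet_derivative_works[THEN iffD1]
        frechet_derivative_works[THEN iffD1]]]) (auto simp: partial_deriv_def)

lemma partial_deriv_mult:
  "f differentiable at x \<Longrightarrow> g differentiable at x \<Longrightarrow>
   partial_deriv i (\<lambda>x. f x * g x) x = f x * partial_deriv i g x + partial_deriv i f x * g x"
  by (subst partial_deriv_eqI[OF has_derivative_mult[OF frechet_derivative_works[THEN iffD1]
        frechet_derivative_works[THEN iffD1]]]) (auto simp: partial_deriv_def)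

lemma partial_deriv_chain:
  fixes f :: "real^'n::finite \<Rightarrow> real"
  assumes "f differentiable at x" and "(H has_real_derivative d) (at (f x))"
  shows "partial_deriv i (\<lambda>x. H (f x)) x = d * partial_deriv i f x"
proof -
  have "((\<lambda>x. H (f x)) has_derivative (\<lambda>v. frechet_derivative f (at x) v * d)) (at x)"
    using has_derivative_compose[OF assms(1)[unfolded frechet_derivative_works]
        has_field_derivative_imp_has_derivative[OF assms(2)]]
    by (simp add: mult.commute)
  from partial_deriv_eqI[OF this] show ?thesis by (simp add: partial_deriv_def)
qed

lemma partial_deriv_const [simp]: "partial_deriv i (\<lambda>x. c) = (\<lambda>x. 0)"
  using partial_deriv_eqI[OF has_derivative_const] by fastforce

lemma higher_diff_SucD: "higher_diff (Suc k) f \<Longrightarrow> higher_diff k f"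
  by (induction k arbitrary: f) auto

lemma higher_diff_imp_continuous: "higher_diff k f \<Longrightarrow> continuous_on UNIV f"
  by (cases k) auto

lemma higher_diff_const: "higher_diff k (\<lambda>x::real^'n::finite. c)"
  by (induction k arbitrary: c) auto

lemma higher_diff_add:
  "higher_diff k f \<Longrightarrow> higher_diff k g \<Longrightarrow> higher_diff k (\<lambda>x. f x + g x)"
proof (induction k arbitrary: f g)
  case (Suc k)
  then have "partial_deriv i (\<lambda>x. f x + g x) = (\<lambda>x. partial_deriv i f x + partial_deriv i g x)" for i
    by (intro ext partial_deriv_add) auto
  with Suc show ?case by (auto intro!: continuous_on_add)
qed (simp add: continuous_on_add)

lemma higher_diff_mult:
  "higher_diff k f \<Longrightarrow> higher_diff k g \<Longrightarrow> higher_diff k (\<lambda>x. f x * g x)"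
proof (induction k arbitrary: f g)
  case (Suc k)
  then have "partial_deriv i (\<lambda>x. f x * g x)
      = (\<lambda>x. f x * partial_deriv i g x + partial_deriv i f x * g x)" for i
    by (intro ext partial_deriv_mult) auto
  moreover have "higher_diff k f" "higher_diff k g"
    using Suc.prems higher_diff_SucD by blast+
  ultimately show ?case
    using Suc by (auto intro!: continuous_on_mult higher_diff_add)
qed (simp add: continuous_on_mult)

lemma higher_diff_diff:
  "higher_diff k f \<Longrightarrow> higher_diff k g \<Longrightarrow> higher_diff k (\<lambda>x. f x - g x)"
  using higher_diff_add[of k f "\<lambda>x. -1 * g x"] higher_diff_mult[OF higher_diff_const, of k g "-1"]
  by simp

lemma higher_diff_minus: "higher_diff k f \<Longrightarrow> higher_diff k (\<lambda>x. - f x)"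
  using higher_diff_diff[OF higher_diff_const, of k f 0] by simp

lemma higher_diff_inverse:
  "higher_diff k f \<Longrightarrow> (\<And>x. f x \<noteq> 0) \<Longrightarrow> higher_diff k (\<lambda>x. inverse (f x))"
proof (induction k arbitrary: f)
  case (Suc k)
  then have "partial_deriv i (\<lambda>x. inverse (f x))
      = (\<lambda>x. - (inverse (f x) * inverse (f x)) * partial_deriv i f x)" for i
    by (intro ext partial_deriv_chain) (auto intro!: derivative_eq_intros simp: power2_eq_square)
  moreover have inv: "higher_diff k (\<lambda>x. inverse (f x))"
    using Suc higher_diff_SucD by blast
  moreover have "higher_diff k (\<lambda>x. - (inverse (f x) * inverse (f x)) * partial_deriv i f x)" for i
    using Suc.prems by (intro higher_diff_mult higher_diff_minus inv) auto
  moreover have "(\<lambda>x. inverse (f x)) differentiable at x" for x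
    using Suc.prems by (auto intro!: differentiable_compose[of inverse] simp: field_differentiable_imp_differentiable)
  ultimately show ?case
    using higher_diff_imp_continuous by auto
qed (auto intro!: continuous_on_inverse)

lemma higher_diff_sqrt:
  "higher_diff k f \<Longrightarrow> (\<And>x. f x > 0) \<Longrightarrow> higher_diff k (\<lambda>x. sqrt (f x))"
proof (induction k arbitrary: f)
  case (Suc k)
  then have "partial_deriv i (\<lambda>x. sqrt (f x)) = (\<lambda>x. inverse (2 * sqrt (f x)) * partial_deriv i f x)" for i
    by (intro ext partial_deriv_chain) (auto intro!: DERIV_real_sqrt)
  moreover have sq: "higher_diff k (\<lambda>x. sqrt (f x))"
    using Suc higher_diff_SucD by blast
  moreover have "higher_diff k (\<lambda>x. inverse (2 * sqrt (f x)) * partial_deriv i f x)" for i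
    using Suc.prems by (intro higher_diff_mult higher_diff_inverse higher_diff_const sq)
      (auto simp: less_imp_neq[symmetric])
  moreover have "(\<lambda>x. sqrt (f x)) differentiable at x" for x
    using Suc.prems DERIV_real_sqrt[of "f x"]
    by (auto intro!: differentiable_compose[of sqrt] field_differentiable_imp_differentiable
        simp: field_differentiable_def)
  ultimately show ?case
    using higher_diff_imp_continuous by auto
qed (auto intro!: continuous_on_real_sqrt)

lemma smooth_fn_differentiable: "smooth_fn f \<Longrightarrow> f differentiable at x"
  using higher_diff.simps(2)[of 0 f] unfolding smooth_fn_def by blast

lemma smooth_fn_continuous: "smooth_fn f \<Longrightarrow> continuous_on UNIV f"
  unfolding smooth_fn_def by (metis higher_diff.simps(1))

lemma smooth_fn_continuous_grad: "smooth_fn f \<Longrightarrow> continuous_on UNIV (grad f)"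
  unfolding smooth_fn_def grad_def[abs_def]
  by (intro continuous_on_vec_lambda) (metis higher_diff.simps higher_diff_imp_continuous)

lemma smooth_fn_diff: "smooth_fn f \<Longrightarrow> smooth_fn g \<Longrightarrow> smooth_fn (\<lambda>x. f x - g x)"
  unfolding smooth_fn_def by (blast intro: higher_diff_diff)

lemma grad_diff:
  assumes "f differentiable at x" and "g differentiable at x"
  shows "grad (\<lambda>x. f x - g x) x = grad f x - grad g x"
proof -
  have "partial_deriv i (\<lambda>x. f x - g x) x = partial_deriv i f x - partial_deriv i g x" for i
    using partial_deriv_eqI[OF has_derivative_diff[OF assms[unfolded frechet_derivative_works]]]
    by (simp add: partial_deriv_def)
  then show ?thesis unfolding grad_def by (simp add: vec_eq_iff)
qed

section \<open>The damping function\<close>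

definition damping :: "real \<Rightarrow> real" where
  "damping t = inverse (t + sqrt (t\<^sup>2 + 1) + 1)"

definition damping_deriv :: "real \<Rightarrow> real" where
  "damping_deriv t = - (1 + t / sqrt (t\<^sup>2 + 1)) * (damping t)\<^sup>2"

lemma square_plus_one_pos [simp]: "0 < t\<^sup>2 + (1::real)" "0 < t * t + (1::real)"
  by (metis add_pos_nonneg zero_le_power2 zero_less_one add.commute)
    (metis add_pos_nonneg zero_le_square zero_less_one add.commute)

lemma abs_less_sqrt_square_plus_one: "\<bar>t\<bar> < sqrt (t\<^sup>2 + 1)"
  by (metis less_add_one real_sqrt_abs real_sqrt_less_iff)

lemma damping_denominator_ge_one: "1 \<le> t + sqrt (t\<^sup>2 + 1) + 1"
  using abs_less_sqrt_square_plus_one[of t] by linarith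

lemma damping_pos: "0 < damping t"
  using damping_denominator_ge_one[of t] by (simp add: damping_def)

lemma damping_le_one: "damping t \<le> 1"
  using damping_denominator_ge_one[of t] by (simp add: damping_def inverse_le_1_iff)

lemma inverse_le_damping:
  assumes "0 \<le> t"
  shows "inverse (2 * t + 2) \<le> damping t"
proof -
  have "sqrt (t\<^sup>2 + 1) \<le> t + 1"
    using assms by (intro real_le_lsqrt) (auto simp: power2_eq_square algebra_simps)
  moreover have "0 < t + sqrt (t\<^sup>2 + 1) + 1"
    using damping_denominator_ge_one[of t] by linarith
  ultimately show ?thesis
    unfolding damping_def by (intro le_imp_inverse_le) auto
qed

lemma divide_sqrt_square_plus_one_bounds: "- 1 \<le> t / sqrt (t\<^sup>2 + 1)" "t / sqrt (t\<^sup>2 + 1) \<le> 1"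
  using abs_less_sqrt_square_plus_one[of t] by (auto simp: abs_less_iff divide_le_eq le_divide_eq)

lemma damping_has_real_derivative: "(damping has_real_derivative damping_deriv t) (at t)"
proof -
  have "t\<^sup>2 + 1 \<noteq> 0" "0 < 1 + t * t" "t + sqrt (t\<^sup>2 + 1) + 1 \<noteq> 0"
    using square_plus_one_pos[of t] damping_denominator_ge_one[of t] by (auto simp: add.commute)
  then show ?thesis
    unfolding damping_def[abs_def] damping_deriv_def
    by (auto intro!: derivative_eq_intros simp: field_simps power2_eq_square)
qed

lemma abs_damping_deriv_le: "\<bar>damping_deriv t\<bar> \<le> 2"
proof -
  have "\<bar>damping_deriv t\<bar> = (1 + t / sqrt (t\<^sup>2 + 1)) * (damping t)\<^sup>2"
    using divide_sqrt_square_plus_one_bounds[of t] by (simp add: damping_deriv_def abs_mult)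
  also have "\<dots> \<le> 2 * 1"
    using divide_sqrt_square_plus_one_bounds[of t] damping_pos[of t] damping_le_one[of t]
    by (intro mult_mono) (auto simp: power_le_one)
  finally show ?thesis by simp
qed

lemma damping_deriv_le:
  assumes "0 \<le> t"
  shows "damping_deriv t \<le> - (damping t)\<^sup>2"
proof -
  have "- (1 + t / sqrt (t\<^sup>2 + 1)) \<le> - 1"
    using assms by simp
  then have "- (1 + t / sqrt (t\<^sup>2 + 1)) * (damping t)\<^sup>2 \<le> - 1 * (damping t)\<^sup>2"
    by (rule mult_right_mono) simp
  then show ?thesis by (simp add: damping_deriv_def)
qed

lemma continuous_on_damping: "continuous_on UNIV damping"
  using damping_has_real_derivative
  by (metis DERIV_isCont continuous_at_imp_continuous_on)

lemma continuous_on_damping_deriv: "continuous_on UNIV damping_deriv"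
  unfolding damping_deriv_def
  using continuous_on_damping abs_less_sqrt_square_plus_one
  by (intro continuous_intros) (auto simp: less_imp_neq[symmetric] intro: order.strict_trans1)

lemma borel_measurable_damping [measurable]: "damping \<in> borel_measurable borel"
  and borel_measurable_damping_deriv [measurable]: "damping_deriv \<in> borel_measurable borel"
  using continuous_on_damping continuous_on_damping_deriv
  by (auto intro: borel_measurable_continuous_onI)

lemma higher_diff_damping: "higher_diff k w \<Longrightarrow> higher_diff k (\<lambda>x. damping (w x))"
proof -
  have "w x + sqrt (w x * w x + 1) + 1 \<noteq> 0" for x
    using damping_denominator_ge_one[of "w x", unfolded power2_eq_square] by linarith
  then show "higher_diff k w \<Longrightarrow> higher_diff k (\<lambda>x. damping (w x))"
    unfolding damping_def power2_eq_square
    by (intro higher_diff_inverse higher_diff_add higher_diff_sqrt higher_diff_mult higher_diff_const)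
      auto
qed

lemma min_le_mult_damping:
  assumes P: "0 \<le> P" and Pu0: "0 \<le> P * u0" and above: "u0 \<le> u"
  shows "P * min 1 (max u0 0) / 2 \<le> P * (u * damping (u - u0))"
proof (cases "P = 0")
  case False
  with P Pu0 have u0: "0 \<le> u0"
    by (simp add: zero_le_mult_iff)
  define v where "v = u - u0"
  have v: "0 \<le> v" and u: "u = v + u0"
    using above by (simp_all add: v_def)
  have "min 1 u0 * (2 * v + 2) \<le> 2 * u"
  proof (cases "1 \<le> u0")
    case False
    then have "u0 * v \<le> v"
      using v u0 by (simp add: mult_left_le_one_le)
    with False show ?thesis
      using u by (simp add: algebra_simps)
  qed (use u v in simp)
  then have "min 1 u0 / 2 \<le> u / (2 * v + 2)"
    using v by (simp add: le_divide_eq mult.commute)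
  also have "\<dots> \<le> u * damping v"
    using inverse_le_damping[OF v] u u0 v by (simp add: divide_inverse mult_left_mono)
  finally have "min 1 u0 / 2 \<le> u * damping (u - u0)"
    by (simp add: v_def)
  from mult_left_mono[OF this P] u0 show ?thesis
    by simp
qed simp

section \<open>Damped test functions\<close>

definition damped :: "(real^'n::finite \<Rightarrow> real) \<Rightarrow> (real^'n \<Rightarrow> real) \<Rightarrow> real^'n \<Rightarrow> real" where
  "damped \<phi> w x = (\<phi> x)\<^sup>2 * damping (w x)"

lemma damped_nonneg: "0 \<le> damped \<phi> w x"
  using damping_pos[of "w x"] by (simp add: damped_def)

lemma damped_le:
  assumes "\<bar>\<phi> x\<bar> \<le> B"
  shows "damped \<phi> w x \<le> B\<^sup>2"
proof -
  have "(\<phi> x)\<^sup>2 * damping (w x) \<le> (\<phi> x)\<^sup>2"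
    by (simp add: mult_left_le damping_le_one)
  also have "\<dots> \<le> B\<^sup>2"
    using assms by (metis abs_ge_zero power2_abs power_mono)
  finally show ?thesis by (simp add: damped_def)
qed

lemma abs_damping_mult_le:
  assumes "\<bar>p\<bar> \<le> B"
  shows "\<bar>2 * p * damping t\<bar> \<le> 2 * B"
proof -
  have "\<bar>p\<bar> * damping t \<le> \<bar>p\<bar>"
    by (simp add: mult_left_le damping_le_one)
  with assms damping_pos[of t] show ?thesis
    by (simp add: abs_mult)
qed

lemma abs_square_damping_deriv_le:
  assumes "\<bar>p\<bar> \<le> B"
  shows "\<bar>p\<^sup>2 * damping_deriv t\<bar> \<le> B\<^sup>2 * 2"
proof -
  have "p\<^sup>2 \<le> B\<^sup>2"
    using assms by (metis abs_ge_zero power2_abs power_mono)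
  with abs_damping_deriv_le[of t] show ?thesis
    by (simp add: abs_mult mult_mono)
qed

definition damped_grad ::
  "(real^'n::finite \<Rightarrow> real) \<Rightarrow> (real^'n \<Rightarrow> real) \<Rightarrow> (real^'n \<Rightarrow> real^'n) \<Rightarrow> real^'n \<Rightarrow> real^'n" where
  "damped_grad \<phi> v Dv x = (2 * \<phi> x * damping (v x)) *\<^sub>R grad \<phi> x + ((\<phi> x)\<^sup>2 * damping_deriv (v x)) *\<^sub>R Dv x"

lemma grad_damped:
  assumes "\<phi> differentiable at x" and "w differentiable at x"
  shows "grad (damped \<phi> w) x = damped_grad \<phi> w (grad w) x"
proof -
  have "(\<lambda>x. damping (w x)) differentiable at x"
    using assms(2) damping_has_real_derivative[of "w x"]
    by (auto intro!: differentiable_compose[of damping] field_differentiable_imp_differentiable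
        simp: field_differentiable_def)
  moreover have "(\<lambda>x. \<phi> x * \<phi> x) differentiable at x"
    using assms(1) by (simp add: differentiable_mult)
  ultimately have "partial_deriv i (damped \<phi> w) x
      = (2 * \<phi> x * damping (w x)) * partial_deriv i \<phi> x
        + ((\<phi> x)\<^sup>2 * damping_deriv (w x)) * partial_deriv i w x" for i
    using assms
    by (simp add: damped_def[abs_def] power2_eq_square partial_deriv_mult
        partial_deriv_chain[OF _ damping_has_real_derivative] algebra_simps)
  then show ?thesis unfolding grad_def damped_grad_def by (simp add: vec_eq_iff)
qed

lemma test_fn_damped:
  assumes "test_fn \<Omega> \<phi>" and "smooth_fn w"
  shows "test_fn \<Omega> (damped \<phi> w)"
proof -
  have supp: "tsupp (damped \<phi> w) \<subseteq> tsupp \<phi>"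
    unfolding tsupp_def damped_def by (intro closure_mono) auto
  moreover have "compact (tsupp (damped \<phi> w))"
    using assms(1) supp unfolding test_fn_def tsupp_def
    by (metis closed_closure compact_Int_closed inf.absorb_iff2)
  moreover have "smooth_fn (damped \<phi> w)"
    using assms unfolding smooth_fn_def test_fn_def damped_def[abs_def] power2_eq_square
    by (intro allI higher_diff_mult higher_diff_damping) auto
  ultimately show ?thesis
    using assms(1) unfolding test_fn_def by blast
qed

section \<open>Symmetric matrices\<close>

lemma inner_matrix_vector_symmetric:
  fixes B :: "real^'n::finite^'n"
  assumes "transpose B = B"
  shows "x \<bullet> (B *v y) = (B *v x) \<bullet> y"
  by (metis assms dot_lmul_matrix vector_transpose_matrix)

lemma discriminant_le_of_nonneg:
  fixes a b c :: real
  assumes nonneg: "\<And>t. 0 \<le> a + 2 * t * b + t\<^sup>2 * c" and "0 \<le> c"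
  shows "b\<^sup>2 \<le> a * c"
proof (cases "c = 0")
  case True
  have "b = 0"
  proof (rule ccontr)
    assume "b \<noteq> 0"
    then have "a + 2 * (- (a + 1) / (2 * b)) * b = -1"
      by (simp add: field_simps)
    with nonneg[of "- (a + 1) / (2 * b)"] True show False by simp
  qed
  with True show ?thesis by simp
next
  case False
  with \<open>0 \<le> c\<close> have c: "c > 0" by simp
  have "0 \<le> a + 2 * (- b / c) * b + (- b / c)\<^sup>2 * c" by (rule nonneg)
  also have "\<dots> = a - b\<^sup>2 / c"
    using c by (simp add: field_simps power2_eq_square)
  finally show ?thesis
    using c by (simp add: field_simps)
qed

text \<open>Cauchy--Schwarz for the form \<open>(\<xi>, \<eta>) \<mapsto> \<xi> \<bullet> B \<eta>\<close> turns a bound on the quadratic form into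
  a bound on the operator.\<close>
lemma norm_matrix_vector_le:
  fixes B :: "real^'n::finite^'n"
  assumes sym: "transpose B = B" and psd: "\<And>\<xi>. 0 \<le> \<xi> \<bullet> (B *v \<xi>)"
    and upper: "\<And>\<xi>. \<xi> \<bullet> (B *v \<xi>) \<le> m * (norm \<xi>)\<^sup>2"
  shows "norm (B *v \<xi>) \<le> m * norm \<xi>"
proof -
  define y where "y = B *v \<xi>"
  have m: "0 \<le> m"
    using psd[of "axis undefined 1"] upper[of "axis undefined 1"] by (simp add: norm_axis_1)
  have yy: "y \<bullet> (B *v \<xi>) = (norm y)\<^sup>2"
    by (simp add: y_def power2_norm_eq_inner)
  have "(y \<bullet> (B *v \<xi>))\<^sup>2 \<le> (\<xi> \<bullet> (B *v \<xi>)) * (y \<bullet> (B *v y))"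
  proof (rule discriminant_le_of_nonneg)
    fix t :: real
    have "0 \<le> (\<xi> + t *\<^sub>R y) \<bullet> (B *v (\<xi> + t *\<^sub>R y))" by (rule psd)
    also have "\<dots> = \<xi> \<bullet> (B *v \<xi>) + 2 * t * (y \<bullet> (B *v \<xi>)) + t\<^sup>2 * (y \<bullet> (B *v y))"
      using inner_matrix_vector_symmetric[OF sym, of \<xi> y]
      by (simp add: matrix_vector_right_distrib matrix_vector_mult_scaleR inner_add_left
          inner_add_right power2_eq_square algebra_simps inner_commute)
    finally show "0 \<le> \<xi> \<bullet> (B *v \<xi>) + 2 * t * (y \<bullet> (B *v \<xi>)) + t\<^sup>2 * (y \<bullet> (B *v y))" .
  qed (rule psd)
  also have "\<dots> \<le> (m * (norm \<xi>)\<^sup>2) * (m * (norm y)\<^sup>2)"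
    using m by (intro mult_mono upper psd) auto
  finally have "(norm y)\<^sup>2 * (norm y)\<^sup>2 \<le> (norm y)\<^sup>2 * (m * norm \<xi>)\<^sup>2"
    unfolding yy by (simp add: power_mult_distrib power2_eq_square mult_ac)
  then have "(norm y)\<^sup>2 \<le> (m * norm \<xi>)\<^sup>2" if "y \<noteq> 0"
    using that mult_le_cancel_left_pos[of "(norm y)\<^sup>2" "(norm y)\<^sup>2" "(m * norm \<xi>)\<^sup>2"] by simp
  then show ?thesis
    using m by (cases "y = 0") (auto simp: y_def intro: power2_le_imp_le)
qed

lemma norm_matrix_vector_le_of_bounds:
  fixes B :: "real^'n::finite^'n"
  assumes "transpose B = B" and "0 \<le> l"
    and bounds: "\<And>\<xi>. l * (norm \<xi>)\<^sup>2 \<le> \<xi> \<bullet> (B *v \<xi>) \<and> \<xi> \<bullet> (B *v \<xi>) \<le> m * (norm \<xi>)\<^sup>2"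
  shows "norm (B *v \<xi>) \<le> m * norm \<xi>"
proof (rule norm_matrix_vector_le[OF assms(1)])
  show "0 \<le> \<zeta> \<bullet> (B *v \<zeta>)" for \<zeta>
    using bounds[of \<zeta>] assms(2) by (meson mult_nonneg_nonneg order_trans zero_le_power2)
qed (use bounds in blast)

lemma quadratic_form_diff:
  fixes N :: "real^'n::finite^'n"
  assumes "transpose N = N"
  shows "(N *v a) \<bullet> a - (N *v b) \<bullet> b = (N *v (a - b)) \<bullet> (a - b) + 2 * ((N *v b) \<bullet> (a - b))"
  using inner_matrix_vector_symmetric[OF assms, of "a - b" b]
  by (simp add: matrix_vector_mult_diff_distrib inner_diff_left inner_diff_right inner_commute)

lemma linear_minus_quadratic_le: "\<theta> > 0 \<Longrightarrow> t * K - \<theta> * t\<^sup>2 \<le> K\<^sup>2 / (4 * \<theta>)"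
  for t K \<theta> :: real
  using sum_squares_ge_zero[of "2 * \<theta> * t - K" 0]
  by (simp add: field_simps power2_eq_square)

text \<open>With \<open>t = \<bar>p\<bar> F \<bar>a\<bar>\<close>, the condition
  \<open>D \<le> -F\<^sup>2\<close> makes the left-hand side at most \<open>t K - \<theta> t\<^sup>2\<close>, where \<open>K\<close> is the term squared on
  the right.\<close>
lemma damped_energy_density_le:
  fixes B N :: "real^'n::finite^'n" and a g d :: "real^'n" and p F D \<theta> :: real
  assumes sym: "transpose B = B" and \<theta>: "\<theta> > 0"
    and coercive: "\<And>\<xi>. \<theta> * (norm \<xi>)\<^sup>2 \<le> \<xi> \<bullet> (B *v \<xi>)"
    and F: "F > 0" and D: "D \<le> - F\<^sup>2"
  shows "(B *v a) \<bullet> ((2 * p * F) *\<^sub>R g + (p\<^sup>2 * D) *\<^sub>R a) - 2 * (p\<^sup>2 * F) * ((N *v d) \<bullet> a)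
    \<le> (2 * norm (B *v g) + 2 * \<bar>p\<bar> * norm (N *v d))\<^sup>2 / (4 * \<theta>)"
proof -
  define t where "t = \<bar>p\<bar> * F * norm a"
  define K where "K = 2 * norm (B *v g) + 2 * \<bar>p\<bar> * norm (N *v d)"
  have "(B *v a) \<bullet> ((2 * p * F) *\<^sub>R g) = 2 * p * F * (a \<bullet> (B *v g))"
    using inner_matrix_vector_symmetric[OF sym, of a g] by (simp add: inner_commute)
  also have "\<dots> \<le> \<bar>2 * p * F * (a \<bullet> (B *v g))\<bar>"
    by (rule abs_ge_self)
  also have "\<dots> = 2 * \<bar>p\<bar> * F * \<bar>a \<bullet> (B *v g)\<bar>"
    using F by (simp add: abs_mult)
  also have "\<dots> \<le> 2 * \<bar>p\<bar> * F * (norm a * norm (B *v g))"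
    using F by (intro mult_left_mono Cauchy_Schwarz_ineq2) auto
  finally have gradient_term: "(B *v a) \<bullet> ((2 * p * F) *\<^sub>R g) \<le> t * (2 * norm (B *v g))"
    by (simp add: t_def algebra_simps)
  have form: "\<theta> * (norm a)\<^sup>2 \<le> (B *v a) \<bullet> a"
    using coercive[of a] by (simp add: inner_commute)
  have "0 \<le> (B *v a) \<bullet> a"
    using form \<theta> by (meson mult_nonneg_nonneg order.trans less_imp_le zero_le_power2)
  with mult_left_mono[OF D zero_le_power2[of p]]
  have "(p\<^sup>2 * D) * ((B *v a) \<bullet> a) \<le> (p\<^sup>2 * - F\<^sup>2) * ((B *v a) \<bullet> a)"
    by (rule mult_right_mono)
  then have "(B *v a) \<bullet> ((p\<^sup>2 * D) *\<^sub>R a) \<le> (p\<^sup>2 * - F\<^sup>2) * ((B *v a) \<bullet> a)"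
    by (simp add: mult.commute)
  also have "\<dots> \<le> (p\<^sup>2 * - F\<^sup>2) * (\<theta> * (norm a)\<^sup>2)"
    using form by (intro mult_left_mono_neg) auto
  also have "\<dots> = - \<theta> * t\<^sup>2"
    by (simp add: t_def power_mult_distrib)
  finally have coercive_term: "(B *v a) \<bullet> ((p\<^sup>2 * D) *\<^sub>R a) \<le> - \<theta> * t\<^sup>2" .
  have "2 * (p\<^sup>2 * F) * - ((N *v d) \<bullet> a) \<le> 2 * (p\<^sup>2 * F) * \<bar>(N *v d) \<bullet> a\<bar>"
    using F by (intro mult_left_mono) auto
  also have "\<dots> \<le> 2 * (p\<^sup>2 * F) * (norm (N *v d) * norm a)"
    using F by (intro mult_left_mono Cauchy_Schwarz_ineq2) auto
  also have "\<dots> = t * (2 * \<bar>p\<bar> * norm (N *v d))"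
    by (simp add: t_def power2_eq_square algebra_simps)
  finally have cross_term: "2 * (p\<^sup>2 * F) * - ((N *v d) \<bullet> a) \<le> t * (2 * \<bar>p\<bar> * norm (N *v d))" .
  have "(B *v a) \<bullet> ((2 * p * F) *\<^sub>R g + (p\<^sup>2 * D) *\<^sub>R a) - 2 * (p\<^sup>2 * F) * ((N *v d) \<bullet> a)
      \<le> t * K - \<theta> * t\<^sup>2"
    using gradient_term coercive_term cross_term by (simp add: K_def inner_add_right algebra_simps)
  also have "\<dots> \<le> K\<^sup>2 / (4 * \<theta>)"
    by (rule linear_minus_quadratic_le[OF \<theta>])
  finally show ?thesis by (simp add: K_def)
qed

section \<open>Convergence in \<open>L\<^sup>2\<close>\<close>

definition square_integrable :: "'a measure \<Rightarrow> ('a \<Rightarrow> 'b::euclidean_space) \<Rightarrow> bool" where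
  "square_integrable M f \<longleftrightarrow> f \<in> borel_measurable M \<and> integrable M (\<lambda>x. (norm (f x))\<^sup>2)"

definition L2_tendsto :: "'a measure \<Rightarrow> (nat \<Rightarrow> 'a \<Rightarrow> 'b::euclidean_space) \<Rightarrow> ('a \<Rightarrow> 'b) \<Rightarrow> bool" where
  "L2_tendsto M F f \<longleftrightarrow> f \<in> borel_measurable M \<and> (\<forall>k. F k \<in> borel_measurable M)
     \<and> (\<forall>k. integrable M (\<lambda>x. (norm (F k x - f x))\<^sup>2))
     \<and> (\<lambda>k. \<integral>x. (norm (F k x - f x))\<^sup>2 \<partial>M) \<longlonglongrightarrow> 0"

lemma norm_add_square_le: "(norm (a + b))\<^sup>2 \<le> 2 * (norm a)\<^sup>2 + 2 * (norm b)\<^sup>2"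
  for a b :: "'b::real_normed_vector"
proof -
  have "(norm (a + b))\<^sup>2 \<le> (norm a + norm b)\<^sup>2"
    by (simp add: norm_triangle_ineq power_mono)
  also have "\<dots> \<le> 2 * (norm a)\<^sup>2 + 2 * (norm b)\<^sup>2"
    using sum_squares_ge_zero[of "norm a - norm b" 0] by (simp add: power2_eq_square algebra_simps)
  finally show ?thesis .
qed

lemma norm_diff_square_le: "(norm (a - b))\<^sup>2 \<le> 2 * (norm a)\<^sup>2 + 2 * (norm b)\<^sup>2"
  for a b :: "'b::real_normed_vector"
  using norm_add_square_le[of a "- b"] by simp

lemma abs_mult_le_young: "d > 0 \<Longrightarrow> \<bar>x * y\<bar> \<le> (d * x\<^sup>2 + y\<^sup>2 / d) / 2"
  for x y d :: real
  using sum_squares_ge_zero[of "d * \<bar>x\<bar> - \<bar>y\<bar>" 0]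
  by (simp add: field_simps power2_eq_square abs_mult)

lemma abs_inner_le_young: "d > 0 \<Longrightarrow> \<bar>a \<bullet> b\<bar> \<le> (d * (norm a)\<^sup>2 + (norm b)\<^sup>2 / d) / 2"
  for a b :: "'b::real_inner"
  using Cauchy_Schwarz_ineq2[of a b] abs_mult_le_young[of d "norm a" "norm b"] by simp

lemma integrable_dominated:
  fixes f g :: "'a \<Rightarrow> real"
  assumes "integrable M g" and "f \<in> borel_measurable M" and "AE x in M. \<bar>f x\<bar> \<le> g x"
  shows "integrable M f"
  using assms(3) by (intro Bochner_Integration.integrable_bound[OF assms(1,2)]) auto

lemma integrable_mult_bounded:
  fixes f g :: "'a \<Rightarrow> real"
  assumes "integrable M f" and "g \<in> borel_measurable M" and "AE x in M. \<bar>g x\<bar> \<le> B"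
  shows "integrable M (\<lambda>x. f x * g x)"
proof (rule integrable_dominated)
  show "integrable M (\<lambda>x. \<bar>B\<bar> * \<bar>f x\<bar>)"
    using assms(1) by simp
  show "AE x in M. \<bar>f x * g x\<bar> \<le> \<bar>B\<bar> * \<bar>f x\<bar>"
    using assms(3)
  proof eventually_elim
    case (elim x)
    then have "\<bar>f x\<bar> * \<bar>g x\<bar> \<le> \<bar>f x\<bar> * \<bar>B\<bar>"
      by (intro mult_left_mono) auto
    then show ?case by (simp add: abs_mult mult.commute)
  qed
qed (use assms in measurable)

lemma square_integrable_bounded:
  assumes "finite_measure M" and [measurable]: "f \<in> borel_measurable M"
    and bound: "AE x in M. norm (f x) \<le> C"
  shows "square_integrable M f"
  unfolding square_integrable_def
proof
  show "integrable M (\<lambda>x. (norm (f x))\<^sup>2)"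
  proof (rule integrable_dominated)
    show "integrable M (\<lambda>x. C\<^sup>2)"
      using assms(1) by (rule finite_measure.integrable_const)
    show "AE x in M. \<bar>(norm (f x))\<^sup>2\<bar> \<le> C\<^sup>2"
      using bound by eventually_elim (simp add: power_mono)
  qed measurable
qed measurable

lemma square_integrable_add:
  assumes "square_integrable M f" and "square_integrable M g"
  shows "square_integrable M (\<lambda>x. f x + g x)"
proof -
  have [measurable]: "f \<in> borel_measurable M" "g \<in> borel_measurable M"
    using assms by (auto simp: square_integrable_def)
  have "integrable M (\<lambda>x. (norm (f x + g x))\<^sup>2)"
  proof (rule integrable_dominated)
    show "integrable M (\<lambda>x. 2 * (norm (f x))\<^sup>2 + 2 * (norm (g x))\<^sup>2)"
      using assms by (simp add: square_integrable_def)
    show "AE x in M. \<bar>(norm (f x + g x))\<^sup>2\<bar> \<le> 2 * (norm (f x))\<^sup>2 + 2 * (norm (g x))\<^sup>2"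
      by (simp add: norm_add_square_le)
  qed measurable
  then show ?thesis by (simp add: square_integrable_def)
qed

lemma square_integrable_scaleR:
  assumes [measurable]: "a \<in> borel_measurable M"
    and bound: "AE x in M. \<bar>a x\<bar> \<le> C" and f: "square_integrable M f"
  shows "square_integrable M (\<lambda>x. a x *\<^sub>R f x)"
proof -
  have [measurable]: "f \<in> borel_measurable M"
    using f by (simp add: square_integrable_def)
  have "integrable M (\<lambda>x. (norm (a x *\<^sub>R f x))\<^sup>2)"
  proof (rule integrable_dominated)
    show "integrable M (\<lambda>x. C\<^sup>2 * (norm (f x))\<^sup>2)"
      using f by (simp add: square_integrable_def)
    show "AE x in M. \<bar>(norm (a x *\<^sub>R f x))\<^sup>2\<bar> \<le> C\<^sup>2 * (norm (f x))\<^sup>2"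
      using bound
    proof eventually_elim
      case (elim x)
      then have "(a x)\<^sup>2 \<le> C\<^sup>2"
        by (metis abs_ge_zero power2_abs power_mono)
      then show ?case by (simp add: power_mult_distrib mult_right_mono)
    qed
  qed measurable
  then show ?thesis by (simp add: square_integrable_def)
qed

lemma square_integrable_diff:
  assumes "square_integrable M f" and "square_integrable M g"
  shows "square_integrable M (\<lambda>x. f x - g x)"
  using square_integrable_add[OF assms(1) square_integrable_scaleR[of "\<lambda>x. - 1" M 1 g]] assms(2)
  by simp

lemma integrable_inner:
  assumes "square_integrable M f" and "square_integrable M g"
  shows "integrable M (\<lambda>x. f x \<bullet> g x)"
proof (rule integrable_dominated)
  have [measurable]: "f \<in> borel_measurable M" "g \<in> borel_measurable M"
    using assms by (auto simp: square_integrable_def)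
  show "integrable M (\<lambda>x. ((norm (f x))\<^sup>2 + (norm (g x))\<^sup>2) / 2)"
    using assms by (simp add: square_integrable_def)
  show "AE x in M. \<bar>f x \<bullet> g x\<bar> \<le> ((norm (f x))\<^sup>2 + (norm (g x))\<^sup>2) / 2"
    by (intro AE_I2) (use abs_inner_le_young[of 1] in simp)
  show "(\<lambda>x. f x \<bullet> g x) \<in> borel_measurable M"
    by measurable
qed

lemma L2_tendsto_dominated:
  assumes G: "L2_tendsto M G g" and H: "L2_tendsto M H h"
    and [measurable]: "f \<in> borel_measurable M" "\<And>k. F k \<in> borel_measurable M"
    and le: "\<And>k. AE x in M.
      (norm (F k x - f x))\<^sup>2 \<le> C * ((norm (G k x - g x))\<^sup>2 + (norm (H k x - h x))\<^sup>2)"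
  shows "L2_tendsto M F f"
proof -
  define dG where "dG k = (\<integral>x. (norm (G k x - g x))\<^sup>2 \<partial>M)" for k
  define dH where "dH k = (\<integral>x. (norm (H k x - h x))\<^sup>2 \<partial>M)" for k
  have iG: "integrable M (\<lambda>x. (norm (G k x - g x))\<^sup>2)"
    and iH: "integrable M (\<lambda>x. (norm (H k x - h x))\<^sup>2)" for k
    using G H by (auto simp: L2_tendsto_def)
  have iF: "integrable M (\<lambda>x. (norm (F k x - f x))\<^sup>2)" for k
  proof (rule integrable_dominated)
    show "integrable M (\<lambda>x. C * ((norm (G k x - g x))\<^sup>2 + (norm (H k x - h x))\<^sup>2))"
      using iG iH by simp
    show "AE x in M. \<bar>(norm (F k x - f x))\<^sup>2\<bar>
        \<le> C * ((norm (G k x - g x))\<^sup>2 + (norm (H k x - h x))\<^sup>2)"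
      using le[of k] by simp
  qed measurable
  have "(\<lambda>k. \<integral>x. (norm (F k x - f x))\<^sup>2 \<partial>M) \<longlonglongrightarrow> 0"
  proof (rule tendsto_sandwich[of "\<lambda>k. 0" _ _ "\<lambda>k. C * (dG k + dH k)"])
    show "\<forall>\<^sub>F k in sequentially. 0 \<le> (\<integral>x. (norm (F k x - f x))\<^sup>2 \<partial>M)"
      by simp
    show "\<forall>\<^sub>F k in sequentially. (\<integral>x. (norm (F k x - f x))\<^sup>2 \<partial>M) \<le> C * (dG k + dH k)"
    proof (intro always_eventually allI)
      fix k
      have "(\<integral>x. (norm (F k x - f x))\<^sup>2 \<partial>M)
          \<le> (\<integral>x. C * ((norm (G k x - g x))\<^sup>2 + (norm (H k x - h x))\<^sup>2) \<partial>M)"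
        using iF iG iH le by (intro integral_mono_AE) auto
      also have "\<dots> = C * (dG k + dH k)"
        using iG iH by (simp add: dG_def dH_def)
      finally show "(\<integral>x. (norm (F k x - f x))\<^sup>2 \<partial>M) \<le> C * (dG k + dH k)" .
    qed
    have "dG \<longlonglongrightarrow> 0" "dH \<longlonglongrightarrow> 0"
      using G H by (simp_all add: L2_tendsto_def dG_def[abs_def] dH_def[abs_def])
    then show "(\<lambda>k. C * (dG k + dH k)) \<longlonglongrightarrow> 0"
      by (metis add_0 mult_zero_right tendsto_add tendsto_mult_left)
  qed simp
  with iF show ?thesis by (simp add: L2_tendsto_def)
qed

lemma L2_tendsto_const: "f \<in> borel_measurable M \<Longrightarrow> L2_tendsto M (\<lambda>k. f) f"
  by (simp add: L2_tendsto_def)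

lemma L2_tendsto_add:
  assumes "L2_tendsto M F f" and "L2_tendsto M G g"
  shows "L2_tendsto M (\<lambda>k x. F k x + G k x) (\<lambda>x. f x + g x)"
proof (rule L2_tendsto_dominated[OF assms, where C = 2])
  show "AE x in M. (norm (F k x + G k x - (f x + g x)))\<^sup>2
      \<le> 2 * ((norm (F k x - f x))\<^sup>2 + (norm (G k x - g x))\<^sup>2)" for k
    using norm_add_square_le[of "F k x - f x" "G k x - g x" for x] by (simp add: algebra_simps)
qed (use assms in \<open>auto simp: L2_tendsto_def intro!: borel_measurable_add\<close>)

lemma L2_tendsto_diff:
  assumes "L2_tendsto M F f" and "L2_tendsto M G g"
  shows "L2_tendsto M (\<lambda>k x. F k x - G k x) (\<lambda>x. f x - g x)"
proof (rule L2_tendsto_dominated[OF assms, where C = 2])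
  show "AE x in M. (norm (F k x - G k x - (f x - g x)))\<^sup>2
      \<le> 2 * ((norm (F k x - f x))\<^sup>2 + (norm (G k x - g x))\<^sup>2)" for k
    using norm_diff_square_le[of "F k x - f x" "G k x - g x" for x] by (simp add: algebra_simps)
qed (use assms in \<open>auto simp: L2_tendsto_def intro!: borel_measurable_diff\<close>)

lemma L2_tendsto_subseq:
  "L2_tendsto M F f \<Longrightarrow> strict_mono r \<Longrightarrow> L2_tendsto M (\<lambda>k. F (r k)) f"
  unfolding L2_tendsto_def using LIMSEQ_subseq_LIMSEQ by (auto simp: o_def)

lemma L2_tendsto_AE_subseq:
  assumes "L2_tendsto M F f"
  obtains r where "strict_mono r" and "AE x in M. (\<lambda>k. F (r k) x) \<longlonglongrightarrow> f x"
proof -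
  obtain r where r: "strict_mono r" "AE x in M. (\<lambda>k. (norm (F (r k) x - f x))\<^sup>2) \<longlonglongrightarrow> 0"
    using tendsto_L1_AE_subseq[of M "\<lambda>k x. (norm (F k x - f x))\<^sup>2"] assms
    by (auto simp: L2_tendsto_def)
  from r(2) have "AE x in M. (\<lambda>k. F (r k) x) \<longlonglongrightarrow> f x"
  proof eventually_elim
    case (elim x)
    then have "(\<lambda>k. sqrt ((norm (F (r k) x - f x))\<^sup>2)) \<longlonglongrightarrow> sqrt 0"
      by (intro tendsto_intros)
    then show ?case
      by (simp add: Lim_null[symmetric] tendsto_norm_zero_iff)
  qed
  with r(1) show thesis by (rule that)
qed

lemma L2_tendsto_iff_diff:
  "L2_tendsto M F f \<longleftrightarrow> f \<in> borel_measurable M \<and> L2_tendsto M (\<lambda>k x. F k x - f x) (\<lambda>x. 0)"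
proof -
  have "F k \<in> borel_measurable M"
    if "f \<in> borel_measurable M" "(\<lambda>x. F k x - f x) \<in> borel_measurable M" for k
    using borel_measurable_add[OF that(2,1)] by simp
  then show ?thesis
    by (auto simp: L2_tendsto_def intro!: borel_measurable_diff)
qed

lemma L2_tendsto_scaleR_zero:
  assumes [measurable]: "\<And>k. a k \<in> borel_measurable M"
    and bound: "\<And>k. AE x in M. \<bar>a k x\<bar> \<le> C" and G: "L2_tendsto M G g"
  shows "L2_tendsto M (\<lambda>k x. a k x *\<^sub>R (G k x - g x)) (\<lambda>x. 0)"
proof (rule L2_tendsto_dominated[OF G G, where C = "C\<^sup>2"])
  show "AE x in M. (norm (a k x *\<^sub>R (G k x - g x) - 0))\<^sup>2
      \<le> C\<^sup>2 * ((norm (G k x - g x))\<^sup>2 + (norm (G k x - g x))\<^sup>2)" for k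
    using bound[of k]
  proof eventually_elim
    case (elim x)
    then have "(a k x)\<^sup>2 \<le> C\<^sup>2"
      by (metis abs_ge_zero power2_abs power_mono)
    then have "(a k x)\<^sup>2 * (norm (G k x - g x))\<^sup>2 \<le> C\<^sup>2 * (norm (G k x - g x))\<^sup>2"
      by (rule mult_right_mono) simp
    also have "\<dots> \<le> C\<^sup>2 * ((norm (G k x - g x))\<^sup>2 + (norm (G k x - g x))\<^sup>2)"
      by (intro mult_left_mono) auto
    finally show ?case
      by (simp add: power_mult_distrib)
  qed
  have [measurable]: "g \<in> borel_measurable M" "G k \<in> borel_measurable M" for k
    using G by (auto simp: L2_tendsto_def)
  show "(\<lambda>x. a k x *\<^sub>R (G k x - g x)) \<in> borel_measurable M" for k
    by measurable
qed simp

lemma L2_tendsto_scaleR_dominated: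
  assumes [measurable]: "\<And>k. a k \<in> borel_measurable M" "b \<in> borel_measurable M"
    and bound: "\<And>k. AE x in M. \<bar>a k x - b x\<bar> \<le> C"
    and lim: "AE x in M. (\<lambda>k. a k x) \<longlonglongrightarrow> b x" and g: "square_integrable M g"
  shows "L2_tendsto M (\<lambda>k x. (a k x - b x) *\<^sub>R g x) (\<lambda>x. 0)"
proof -
  have [measurable]: "g \<in> borel_measurable M"
    using g by (simp add: square_integrable_def)
  have "(\<lambda>k. \<integral>x. (norm ((a k x - b x) *\<^sub>R g x))\<^sup>2 \<partial>M) \<longlonglongrightarrow> (\<integral>x. 0 \<partial>M)"
  proof (rule integral_dominated_convergence)
    show "integrable M (\<lambda>x. C\<^sup>2 * (norm (g x))\<^sup>2)"
      using g by (simp add: square_integrable_def)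
    show "AE x in M. (\<lambda>k. (norm ((a k x - b x) *\<^sub>R g x))\<^sup>2) \<longlonglongrightarrow> 0"
      using lim by eventually_elim (auto intro!: tendsto_eq_intros simp: LIM_zero_iff)
    show "AE x in M. norm ((norm ((a k x - b x) *\<^sub>R g x))\<^sup>2) \<le> C\<^sup>2 * (norm (g x))\<^sup>2" for k
      using bound[of k]
    proof eventually_elim
      case (elim x)
      then have "(a k x - b x)\<^sup>2 \<le> C\<^sup>2"
        by (metis abs_ge_zero power2_abs power_mono)
      then show ?case
        by (simp add: power_mult_distrib mult_right_mono)
    qed
  qed measurable
  moreover have "integrable M (\<lambda>x. (norm ((a k x - b x) *\<^sub>R g x))\<^sup>2)" for k
    using square_integrable_scaleR[OF _ bound g] by (simp add: square_integrable_def)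
  ultimately show ?thesis
    by (simp add: L2_tendsto_def)
qed

lemma L2_tendsto_scaleR:
  assumes [measurable]: "\<And>k. a k \<in> borel_measurable M" "b \<in> borel_measurable M"
    and bound: "\<And>k. AE x in M. \<bar>a k x\<bar> \<le> C"
    and lim: "AE x in M. (\<lambda>k. a k x) \<longlonglongrightarrow> b x"
    and G: "L2_tendsto M G g" and g: "square_integrable M g"
  shows "L2_tendsto M (\<lambda>k x. a k x *\<^sub>R G k x) (\<lambda>x. b x *\<^sub>R g x)"
proof -
  have [measurable]: "g \<in> borel_measurable M"
    using g by (simp add: square_integrable_def)
  have "AE x in M. \<forall>k. \<bar>a k x\<bar> \<le> C"
    using bound by (simp add: AE_all_countable)
  with lim have "AE x in M. \<bar>b x\<bar> \<le> C"
    by eventually_elim (auto intro: tendsto_upperbound tendsto_rabs)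
  then have "AE x in M. \<bar>a k x - b x\<bar> \<le> 2 * C" for k
    using bound[of k] by eventually_elim auto
  from L2_tendsto_scaleR_dominated[OF assms(1,2) this lim g]
  have "L2_tendsto M (\<lambda>k x. a k x *\<^sub>R (G k x - g x) + (a k x - b x) *\<^sub>R g x) (\<lambda>x. 0)"
    using L2_tendsto_add[OF L2_tendsto_scaleR_zero[OF assms(1) bound G]] by simp
  then show ?thesis
    by (subst L2_tendsto_iff_diff) (simp add: algebra_simps)
qed

lemma integral_inner_tendsto:
  assumes a: "square_integrable M a" and G: "L2_tendsto M G g" and g: "square_integrable M g"
  shows "(\<lambda>k. \<integral>x. a x \<bullet> G k x \<partial>M) \<longlonglongrightarrow> (\<integral>x. a x \<bullet> g x \<partial>M)"
proof -
  define d where "d k = (\<integral>x. (norm (G k x - g x))\<^sup>2 \<partial>M)" for k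
  define S where "S = (\<integral>x. (norm (a x))\<^sup>2 \<partial>M)"
  have d: "d \<longlonglongrightarrow> 0" and di: "\<And>k. integrable M (\<lambda>x. (norm (G k x - g x))\<^sup>2)"
    using G by (auto simp: L2_tendsto_def d_def[abs_def])
  have Gk: "square_integrable M (\<lambda>x. G k x - g x)" for k
    using G g by (simp add: L2_tendsto_def square_integrable_def borel_measurable_diff)
  have "(\<lambda>k. \<integral>x. a x \<bullet> (G k x - g x) \<partial>M) \<longlonglongrightarrow> 0"
  proof (rule LIMSEQ_I)
    fix r :: real assume r: "0 < r"
    have S: "0 \<le> S" by (simp add: S_def)
    define \<delta> where "\<delta> = r / (S + 1)"
    have \<delta>: "0 < \<delta>" "\<delta> * S < r"
      using r S by (simp_all add: \<delta>_def field_simps)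
    obtain N where N: "\<And>k. k \<ge> N \<Longrightarrow> d k < r * \<delta>"
      using order_tendstoD(2)[OF d, of "r * \<delta>"] r \<delta> by (auto simp: eventually_sequentially)
    show "\<exists>N. \<forall>k\<ge>N. norm ((\<integral>x. a x \<bullet> (G k x - g x) \<partial>M) - 0) < r"
    proof (intro exI allI impI)
      fix k assume "N \<le> k"
      have "norm (\<integral>x. a x \<bullet> (G k x - g x) \<partial>M) \<le> (\<integral>x. \<bar>a x \<bullet> (G k x - g x)\<bar> \<partial>M)"
        using integral_norm_bound by fastforce
      also have "\<dots> \<le> (\<integral>x. (\<delta> * (norm (a x))\<^sup>2 + (norm (G k x - g x))\<^sup>2 / \<delta>) / 2 \<partial>M)"
        using a di abs_inner_le_young[OF \<delta>(1)] integrable_inner[OF a Gk]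
        by (intro integral_mono) (auto simp: square_integrable_def)
      also have "\<dots> = (\<delta> * S + d k / \<delta>) / 2"
        using a di by (simp add: S_def d_def square_integrable_def)
      also have "\<dots> < (r + r) / 2"
      proof -
        have "d k / \<delta> < r"
          using N[OF \<open>N \<le> k\<close>] \<delta> by (simp add: divide_less_eq mult.commute)
        with \<delta>(2) show ?thesis by simp
      qed
      finally show "norm ((\<integral>x. a x \<bullet> (G k x - g x) \<partial>M) - 0) < r" by simp
    qed
  qed
  moreover have "(\<integral>x. a x \<bullet> G k x \<partial>M) = (\<integral>x. a x \<bullet> (G k x - g x) \<partial>M) + (\<integral>x. a x \<bullet> g x \<partial>M)" for k
    using integrable_inner[OF a Gk] integrable_inner[OF a g]
    by (simp add: inner_diff_right flip: Bochner_Integration.integral_add)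
  ultimately show ?thesis
    using tendsto_add[OF _ tendsto_const, of _ 0 sequentially "\<integral>x. a x \<bullet> g x \<partial>M"] by simp
qed

lemma integral_inner_eq_limit:
  assumes a: "square_integrable M a" and G: "L2_tendsto M G g" and g: "square_integrable M g"
    and R: "integrable M R" and [measurable]: "\<And>k. \<psi>s k \<in> borel_measurable M" "\<psi> \<in> borel_measurable M"
    and lim: "AE x in M. (\<lambda>k. \<psi>s k x) \<longlonglongrightarrow> \<psi> x" and bound: "\<And>k. AE x in M. \<bar>\<psi>s k x\<bar> \<le> B"
    and eq: "\<And>k. (\<integral>x. a x \<bullet> G k x \<partial>M) = (\<integral>x. R x * \<psi>s k x \<partial>M)"
  shows "(\<integral>x. a x \<bullet> g x \<partial>M) = (\<integral>x. R x * \<psi> x \<partial>M)"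
proof (rule LIMSEQ_unique)
  show "(\<lambda>k. \<integral>x. R x * \<psi>s k x \<partial>M) \<longlonglongrightarrow> (\<integral>x. a x \<bullet> g x \<partial>M)"
    using integral_inner_tendsto[OF a G g] by (simp add: eq)
  have [measurable]: "R \<in> borel_measurable M"
    using R by simp
  show "(\<lambda>k. \<integral>x. R x * \<psi>s k x \<partial>M) \<longlonglongrightarrow> (\<integral>x. R x * \<psi> x \<partial>M)"
  proof (rule integral_dominated_convergence[where w = "\<lambda>x. \<bar>B\<bar> * \<bar>R x\<bar>"])
    show "AE x in M. (\<lambda>k. R x * \<psi>s k x) \<longlonglongrightarrow> R x * \<psi> x"
      using lim by eventually_elim (intro tendsto_intros)
    show "AE x in M. norm (R x * \<psi>s k x) \<le> \<bar>B\<bar> * \<bar>R x\<bar>" for k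
      using bound[of k]
    proof eventually_elim
      case (elim x)
      then have "\<bar>R x\<bar> * \<bar>\<psi>s k x\<bar> \<le> \<bar>R x\<bar> * \<bar>B\<bar>"
        by (intro mult_left_mono) auto
      then show ?case by (simp add: abs_mult mult.commute)
    qed
  qed (use R in auto)
qed

lemma borel_measurable_vec:
  fixes f :: "'a \<Rightarrow> real^'n::finite"
  assumes "\<And>i. (\<lambda>x. f x $ i) \<in> borel_measurable M"
  shows "f \<in> borel_measurable M"
proof (rule borel_measurable_euclidean_space[THEN iffD2], intro ballI)
  fix b :: "real^'n" assume "b \<in> Basis"
  then obtain i where "b = axis i 1"
    unfolding Basis_vec_def Basis_real_def by blast
  then show "(\<lambda>x. f x \<bullet> b) \<in> borel_measurable M"
    using assms[of i] by (simp add: inner_axis)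
qed

lemma borel_measurable_matrix_vector:
  fixes B :: "'a \<Rightarrow> real^'n::finite^'n"
  assumes [measurable]: "\<And>i j. (\<lambda>x. B x $ i $ j) \<in> borel_measurable M" "f \<in> borel_measurable M"
  shows "(\<lambda>x. B x *v f x) \<in> borel_measurable M"
proof (rule borel_measurable_vec)
  fix i
  have [measurable]: "(\<lambda>x. f x $ j) \<in> borel_measurable M" for j
    using measurable_compose[OF assms(2) borel_measurable_nth] by simp
  show "(\<lambda>x. (B x *v f x) $ i) \<in> borel_measurable M"
    unfolding matrix_vector_mult_def by simp measurable
qed

lemma square_integrable_matrix_vector:
  fixes B :: "'a \<Rightarrow> real^'n::finite^'n"
  assumes "\<And>i j. (\<lambda>x. B x $ i $ j) \<in> borel_measurable M"
    and bound: "AE x in M. \<forall>\<xi>. norm (B x *v \<xi>) \<le> K * norm \<xi>" and f: "square_integrable M f"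
  shows "square_integrable M (\<lambda>x. B x *v f x)"
proof -
  have [measurable]: "f \<in> borel_measurable M" "(\<lambda>x. B x *v f x) \<in> borel_measurable M"
    using f assms(1) by (auto simp: square_integrable_def intro: borel_measurable_matrix_vector)
  have "integrable M (\<lambda>x. (norm (B x *v f x))\<^sup>2)"
  proof (rule integrable_dominated)
    show "integrable M (\<lambda>x. K\<^sup>2 * (norm (f x))\<^sup>2)"
      using f by (simp add: square_integrable_def)
    show "AE x in M. \<bar>(norm (B x *v f x))\<^sup>2\<bar> \<le> K\<^sup>2 * (norm (f x))\<^sup>2"
      using bound
    proof eventually_elim
      case (elim x)
      then have "(norm (B x *v f x))\<^sup>2 \<le> (K * norm (f x))\<^sup>2"
        by (intro power_mono) auto
      then show ?case by (simp add: power_mult_distrib)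
    qed
  qed measurable
  then show ?thesis by (simp add: square_integrable_def)
qed

section \<open>Test functions on a bounded open set\<close>

locale bounded_open_set =
  fixes \<Omega> :: "(real^'n::finite) set"
  assumes open_set: "open \<Omega>" and bounded_set: "bounded \<Omega>"
begin

lemma lmeasurable: "\<Omega> \<in> lmeasurable"
  using lmeasurable_open[OF bounded_set open_set] .

lemma finite_measure: "finite_measure (lebesgue_on \<Omega>)"
  using finite_measure_lebesgue_on[OF lmeasurable] .

lemma integrable_const [simp]: "integrable (lebesgue_on \<Omega>) (\<lambda>x. c :: real)"
  using finite_measure.integrable_const[OF finite_measure] .

lemma AE_lebesgue_onI: "(\<And>x. x \<in> \<Omega> \<Longrightarrow> P x) \<Longrightarrow> AE x in lebesgue_on \<Omega>. P x"
  by (rule AE_I2) simp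

lemma continuous_on_measurable:
  "continuous_on UNIV f \<Longrightarrow> f \<in> borel_measurable (lebesgue_on \<Omega>)"
  using lmeasurable
  by (intro continuous_imp_measurable_on_sets_lebesgue[OF continuous_on_subset]) auto

lemma continuous_on_bounded:
  fixes f :: "real^'n \<Rightarrow> 'b::real_normed_vector"
  assumes "continuous_on UNIV f"
  obtains B where "\<And>x. x \<in> \<Omega> \<Longrightarrow> norm (f x) \<le> B"
proof -
  have "compact (f ` closure \<Omega>)"
    using assms bounded_set
    by (intro compact_continuous_image) (auto intro: continuous_on_subset simp: compact_closure)
  then obtain B where "\<forall>y \<in> f ` closure \<Omega>. norm y \<le> B"
    by (meson bounded_iff compact_imp_bounded)
  with closure_subset show thesis
    by (intro that) auto
qed

lemma test_fn_measurable:
  "test_fn \<Omega> \<phi> \<Longrightarrow> \<phi> \<in> borel_measurable (lebesgue_on \<Omega>)"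
  by (simp add: test_fn_def continuous_on_measurable smooth_fn_continuous)

lemma test_fn_grad_measurable:
  "test_fn \<Omega> \<phi> \<Longrightarrow> grad \<phi> \<in> borel_measurable (lebesgue_on \<Omega>)"
  by (simp add: test_fn_def continuous_on_measurable smooth_fn_continuous_grad)

lemma test_fn_bounded:
  assumes "test_fn \<Omega> \<phi>"
  obtains B where "\<And>x. x \<in> \<Omega> \<Longrightarrow> \<bar>\<phi> x\<bar> \<le> B"
  using continuous_on_bounded[of \<phi>] assms by (auto simp: test_fn_def smooth_fn_continuous)

lemma test_fn_grad_bounded:
  assumes "test_fn \<Omega> \<phi>"
  obtains B where "\<And>x. x \<in> \<Omega> \<Longrightarrow> norm (grad \<phi> x) \<le> B"
  using continuous_on_bounded[of "grad \<phi>"] assms by (auto simp: test_fn_def smooth_fn_continuous_grad)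

lemma square_integrable_bounded_on:
  assumes "f \<in> borel_measurable (lebesgue_on \<Omega>)" and "\<And>x. x \<in> \<Omega> \<Longrightarrow> norm (f x) \<le> B"
  shows "square_integrable (lebesgue_on \<Omega>) f"
  using assms by (intro square_integrable_bounded[OF finite_measure]) (auto intro!: AE_I2)

lemma square_integrable_test_fn:
  "test_fn \<Omega> \<phi> \<Longrightarrow> square_integrable (lebesgue_on \<Omega>) \<phi>"
  by (metis real_norm_def square_integrable_bounded_on test_fn_bounded test_fn_measurable)

lemma square_integrable_grad_test_fn:
  "test_fn \<Omega> \<phi> \<Longrightarrow> square_integrable (lebesgue_on \<Omega>) (grad \<phi>)"
  by (metis square_integrable_bounded_on test_fn_grad_bounded test_fn_grad_measurable)

lemma H01_approximation:
  assumes "H01 \<Omega> u Du"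
  obtains \<phi>s where "\<And>k. test_fn \<Omega> (\<phi>s k)"
    and "L2_tendsto (lebesgue_on \<Omega>) \<phi>s u" and "L2_tendsto (lebesgue_on \<Omega>) (\<lambda>k. grad (\<phi>s k)) Du"
    and "square_integrable (lebesgue_on \<Omega>) u" and "square_integrable (lebesgue_on \<Omega>) Du"
proof -
  obtain \<phi>s where test: "\<And>k. test_fn \<Omega> (\<phi>s k)"
    and lim: "(\<lambda>k. \<integral>x. (\<phi>s k x - u x)\<^sup>2 \<partial>lebesgue_on \<Omega>) \<longlonglongrightarrow> 0"
    and lim_grad: "(\<lambda>k. \<integral>x. (norm (grad (\<phi>s k) x - Du x))\<^sup>2 \<partial>lebesgue_on \<Omega>) \<longlonglongrightarrow> 0"
    and u: "square_integrable (lebesgue_on \<Omega>) u" and Du: "square_integrable (lebesgue_on \<Omega>) Du"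
    using assms by (auto simp: H01_def square_integrable_def)
  have conv: "L2_tendsto (lebesgue_on \<Omega>) \<phi>s u"
    using lim u test square_integrable_diff[OF square_integrable_test_fn u]
    by (simp add: L2_tendsto_def square_integrable_def test_fn_measurable)
  have conv_grad: "L2_tendsto (lebesgue_on \<Omega>) (\<lambda>k. grad (\<phi>s k)) Du"
    using lim_grad Du test square_integrable_diff[OF square_integrable_grad_test_fn Du]
    by (simp add: L2_tendsto_def square_integrable_def test_fn_grad_measurable)
  show thesis
    by (rule that[OF test conv conv_grad u Du])
qed

lemma square_integrable_damped_grad:
  assumes \<phi>: "test_fn \<Omega> \<phi>" and [measurable]: "v \<in> borel_measurable (lebesgue_on \<Omega>)"
    and Dv: "square_integrable (lebesgue_on \<Omega>) Dv"
  shows "square_integrable (lebesgue_on \<Omega>) (damped_grad \<phi> v Dv)"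
proof -
  obtain B where B: "\<And>x. x \<in> \<Omega> \<Longrightarrow> \<bar>\<phi> x\<bar> \<le> B"
    using test_fn_bounded[OF \<phi>] by blast
  have [measurable]: "\<phi> \<in> borel_measurable (lebesgue_on \<Omega>)"
    using test_fn_measurable[OF \<phi>] .
  have "square_integrable (lebesgue_on \<Omega>) (\<lambda>x. (2 * \<phi> x * damping (v x)) *\<^sub>R grad \<phi> x)"
  proof (rule square_integrable_scaleR[OF _ AE_lebesgue_onI square_integrable_grad_test_fn[OF \<phi>]])
    show "\<bar>2 * \<phi> x * damping (v x)\<bar> \<le> 2 * B" if "x \<in> \<Omega>" for x
      using B[OF that] by (rule abs_damping_mult_le)
  qed measurable
  moreover have "square_integrable (lebesgue_on \<Omega>) (\<lambda>x. ((\<phi> x)\<^sup>2 * damping_deriv (v x)) *\<^sub>R Dv x)"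
  proof (rule square_integrable_scaleR[OF _ AE_lebesgue_onI Dv])
    show "\<bar>(\<phi> x)\<^sup>2 * damping_deriv (v x)\<bar> \<le> B\<^sup>2 * 2" if "x \<in> \<Omega>" for x
      using B[OF that] by (rule abs_square_damping_deriv_le)
  qed measurable
  ultimately show ?thesis
    unfolding damped_grad_def[abs_def] by (rule square_integrable_add)
qed

lemma damped_grad_tendsto:
  assumes \<phi>: "test_fn \<Omega> \<phi>" and ws: "\<And>k. smooth_fn (ws k)"
    and [measurable]: "v \<in> borel_measurable (lebesgue_on \<Omega>)"
    and lim: "AE x in lebesgue_on \<Omega>. (\<lambda>k. ws k x) \<longlonglongrightarrow> v x"
    and grad_lim: "L2_tendsto (lebesgue_on \<Omega>) (\<lambda>k. grad (ws k)) Dv"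
    and Dv: "square_integrable (lebesgue_on \<Omega>) Dv"
  shows "L2_tendsto (lebesgue_on \<Omega>) (\<lambda>k. grad (damped \<phi> (ws k))) (damped_grad \<phi> v Dv)"
proof -
  obtain B where B: "\<And>x. x \<in> \<Omega> \<Longrightarrow> \<bar>\<phi> x\<bar> \<le> B"
    using test_fn_bounded[OF \<phi>] by blast
  have [measurable]: "\<phi> \<in> borel_measurable (lebesgue_on \<Omega>)" "ws k \<in> borel_measurable (lebesgue_on \<Omega>)"
    "grad \<phi> \<in> borel_measurable (lebesgue_on \<Omega>)" for k
    using test_fn_measurable[OF \<phi>] test_fn_grad_measurable[OF \<phi>] ws
    by (auto intro: continuous_on_measurable smooth_fn_continuous)
  have cont: "isCont damping t" "isCont damping_deriv t" for t
    using continuous_on_damping continuous_on_damping_deriv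
    by (simp_all add: continuous_on_eq_continuous_at)
  have "L2_tendsto (lebesgue_on \<Omega>) (\<lambda>k x. (2 * \<phi> x * damping (ws k x)) *\<^sub>R grad \<phi> x)
      (\<lambda>x. (2 * \<phi> x * damping (v x)) *\<^sub>R grad \<phi> x)"
  proof (rule L2_tendsto_scaleR[OF _ _ AE_lebesgue_onI _ L2_tendsto_const square_integrable_grad_test_fn[OF \<phi>]])
    show "\<bar>2 * \<phi> x * damping (ws k x)\<bar> \<le> 2 * B" if "x \<in> \<Omega>" for x k
      using B[OF that] by (rule abs_damping_mult_le)
    show "AE x in lebesgue_on \<Omega>. (\<lambda>k. 2 * \<phi> x * damping (ws k x)) \<longlonglongrightarrow> 2 * \<phi> x * damping (v x)"
      using lim by eventually_elim (intro tendsto_intros isCont_tendsto_compose[OF cont(1)])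
  qed measurable
  moreover have "L2_tendsto (lebesgue_on \<Omega>) (\<lambda>k x. ((\<phi> x)\<^sup>2 * damping_deriv (ws k x)) *\<^sub>R grad (ws k) x)
      (\<lambda>x. ((\<phi> x)\<^sup>2 * damping_deriv (v x)) *\<^sub>R Dv x)"
  proof (rule L2_tendsto_scaleR[OF _ _ AE_lebesgue_onI _ grad_lim Dv])
    show "\<bar>(\<phi> x)\<^sup>2 * damping_deriv (ws k x)\<bar> \<le> B\<^sup>2 * 2" if "x \<in> \<Omega>" for x k
      using B[OF that] by (rule abs_square_damping_deriv_le)
    show "AE x in lebesgue_on \<Omega>. (\<lambda>k. (\<phi> x)\<^sup>2 * damping_deriv (ws k x)) \<longlonglongrightarrow> (\<phi> x)\<^sup>2 * damping_deriv (v x)"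
      using lim by eventually_elim (intro tendsto_intros isCont_tendsto_compose[OF cont(2)])
  qed measurable
  ultimately have "L2_tendsto (lebesgue_on \<Omega>) (\<lambda>k. damped_grad \<phi> (ws k) (grad (ws k))) (damped_grad \<phi> v Dv)"
    unfolding damped_grad_def by (rule L2_tendsto_add)
  moreover have "grad (damped \<phi> (ws k)) = damped_grad \<phi> (ws k) (grad (ws k))" for k
    using \<phi> ws by (intro ext grad_damped) (auto simp: test_fn_def smooth_fn_differentiable)
  ultimately show ?thesis
    by simp
qed

lemma H01_difference_approximation:
  assumes "H01 \<Omega> u Du" and "H01 \<Omega> u0 Du0"
  obtains ws where "\<And>k. smooth_fn (ws k)"
    and "AE x in lebesgue_on \<Omega>. (\<lambda>k. ws k x) \<longlonglongrightarrow> u x - u0 x"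
    and "L2_tendsto (lebesgue_on \<Omega>) (\<lambda>k. grad (ws k)) (\<lambda>x. Du x - Du0 x)"
proof -
  obtain \<phi>1 where \<phi>1: "\<And>k. test_fn \<Omega> (\<phi>1 k)" "L2_tendsto (lebesgue_on \<Omega>) \<phi>1 u"
      "L2_tendsto (lebesgue_on \<Omega>) (\<lambda>k. grad (\<phi>1 k)) Du"
    using H01_approximation[OF assms(1)] by blast
  obtain \<phi>0 where \<phi>0: "\<And>k. test_fn \<Omega> (\<phi>0 k)" "L2_tendsto (lebesgue_on \<Omega>) \<phi>0 u0"
      "L2_tendsto (lebesgue_on \<Omega>) (\<lambda>k. grad (\<phi>0 k)) Du0"
    using H01_approximation[OF assms(2)] by blast
  obtain r1 where r1: "strict_mono r1" "AE x in lebesgue_on \<Omega>. (\<lambda>k. \<phi>1 (r1 k) x) \<longlonglongrightarrow> u x"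
    using L2_tendsto_AE_subseq[OF \<phi>1(2)] by blast
  obtain r2 where r2: "strict_mono r2" "AE x in lebesgue_on \<Omega>. (\<lambda>k. \<phi>0 (r1 (r2 k)) x) \<longlonglongrightarrow> u0 x"
    using L2_tendsto_AE_subseq[OF L2_tendsto_subseq[OF \<phi>0(2) r1(1)]] by blast
  define s where "s = r1 \<circ> r2"
  have s: "strict_mono s"
    unfolding s_def using r1(1) r2(1) by (rule strict_mono_o)
  have smooth: "smooth_fn (\<phi>1 k)" "smooth_fn (\<phi>0 k)" for k
    using \<phi>1(1) \<phi>0(1) by (auto simp: test_fn_def)
  show thesis
  proof (rule that[of "\<lambda>k x. \<phi>1 (s k) x - \<phi>0 (s k) x"])
    show "smooth_fn (\<lambda>x. \<phi>1 (s k) x - \<phi>0 (s k) x)" for k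
      by (intro smooth_fn_diff smooth)
    show "AE x in lebesgue_on \<Omega>. (\<lambda>k. \<phi>1 (s k) x - \<phi>0 (s k) x) \<longlonglongrightarrow> u x - u0 x"
      using r1(2) r2(2)
    proof eventually_elim
      case (elim x)
      then have "(\<lambda>k. \<phi>1 (r1 (r2 k)) x) \<longlonglongrightarrow> u x"
        using LIMSEQ_subseq_LIMSEQ[OF _ r2(1)] by (auto simp: o_def)
      with elim show ?case
        by (auto simp: s_def intro: tendsto_diff)
    qed
    have "grad (\<lambda>x. \<phi>1 (s k) x - \<phi>0 (s k) x) = (\<lambda>x. grad (\<phi>1 (s k)) x - grad (\<phi>0 (s k)) x)" for k
      by (intro ext grad_diff smooth_fn_differentiable smooth)
    then show "L2_tendsto (lebesgue_on \<Omega>) (\<lambda>k. grad (\<lambda>x. \<phi>1 (s k) x - \<phi>0 (s k) x)) (\<lambda>x. Du x - Du0 x)"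
      using L2_tendsto_diff[OF L2_tendsto_subseq[OF \<phi>1(3) s] L2_tendsto_subseq[OF \<phi>0(3) s]]
      by simp
  qed
qed

lemma integrable_test_fn_square_mult:
  assumes "test_fn \<Omega> \<phi>" and "integrable (lebesgue_on \<Omega>) q"
  shows "integrable (lebesgue_on \<Omega>) (\<lambda>x. (\<phi> x)\<^sup>2 * q x)"
proof -
  obtain B where B: "\<And>x. x \<in> \<Omega> \<Longrightarrow> \<bar>\<phi> x\<bar> \<le> B"
    using test_fn_bounded[OF assms(1)] by blast
  have [measurable]: "\<phi> \<in> borel_measurable (lebesgue_on \<Omega>)"
    using test_fn_measurable[OF assms(1)] .
  have "(\<phi> x)\<^sup>2 \<le> B\<^sup>2" if "x \<in> \<Omega>" for x
    using B[OF that] by (metis abs_ge_zero power2_abs power_mono)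
  then have "AE x in lebesgue_on \<Omega>. \<bar>(\<phi> x)\<^sup>2\<bar> \<le> B\<^sup>2"
    by (intro AE_lebesgue_onI) simp
  from integrable_mult_bounded[OF assms(2) _ this] show ?thesis
    by (simp add: mult.commute)
qed

text \<open>Otherwise \<open>u\<^sup>2 q = 0\<close>, as the almost everywhere limit of a subsequence of \<open>\<phi>\<^sub>k\<^sup>2 q\<close>.\<close>
lemma exists_approximant_integral_pos:
  assumes conv: "L2_tendsto (lebesgue_on \<Omega>) \<phi>s u" and tests: "\<And>k. test_fn \<Omega> (\<phi>s k)"
    and q: "integrable (lebesgue_on \<Omega>) q" "AE x in lebesgue_on \<Omega>. 0 \<le> q x"
    and nonzero: "\<not> (AE x in lebesgue_on \<Omega>. u x * q x = 0)"
  obtains k where "0 < (\<integral>x. (\<phi>s k x)\<^sup>2 * q x \<partial>lebesgue_on \<Omega>)"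
proof (rule ccontr)
  assume "\<not> thesis"
  have "AE x in lebesgue_on \<Omega>. (\<phi>s k x)\<^sup>2 * q x = 0" for k
  proof -
    have nonneg: "AE x in lebesgue_on \<Omega>. 0 \<le> (\<phi>s k x)\<^sup>2 * q x"
      using q(2) by eventually_elim simp
    have "(\<integral>x. (\<phi>s k x)\<^sup>2 * q x \<partial>lebesgue_on \<Omega>) = 0"
      using that \<open>\<not> thesis\<close> integral_nonneg_AE[OF nonneg] by (meson not_le order_antisym)
    then show ?thesis
      using integral_nonneg_eq_0_iff_AE[OF integrable_test_fn_square_mult[OF tests q(1)] nonneg]
      by blast
  qed
  then have zero: "AE x in lebesgue_on \<Omega>. \<forall>k. (\<phi>s k x)\<^sup>2 * q x = 0"
    by (rule AE_all_countable[THEN iffD2, rule_format])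
  obtain r where "AE x in lebesgue_on \<Omega>. (\<lambda>k. \<phi>s (r k) x) \<longlonglongrightarrow> u x"
    using L2_tendsto_AE_subseq[OF conv] by blast
  with zero have "AE x in lebesgue_on \<Omega>. u x * q x = 0"
  proof eventually_elim
    case (elim x)
    then have "(\<lambda>k. (\<phi>s (r k) x)\<^sup>2 * q x) \<longlonglongrightarrow> (u x)\<^sup>2 * q x"
      by (intro tendsto_intros)
    moreover have "(\<lambda>k. (\<phi>s (r k) x)\<^sup>2 * q x) = (\<lambda>k. 0)"
      using elim(1) by (intro ext) blast
    ultimately have "(u x)\<^sup>2 * q x = 0"
      by (simp add: LIMSEQ_const_iff)
    then show ?case
      by (simp add: power2_eq_square)
  qed
  with nonzero show False by simp
qed

lemma AE_abs_damped_le: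
  assumes "\<And>x. x \<in> \<Omega> \<Longrightarrow> \<bar>\<phi> x\<bar> \<le> B"
  shows "AE x in lebesgue_on \<Omega>. \<bar>damped \<phi> v x\<bar> \<le> B\<^sup>2"
  using assms by (intro AE_lebesgue_onI) (simp add: damped_nonneg damped_le)

lemma damped_measurable:
  assumes "test_fn \<Omega> \<phi>" and [measurable]: "v \<in> borel_measurable (lebesgue_on \<Omega>)"
  shows "damped \<phi> v \<in> borel_measurable (lebesgue_on \<Omega>)"
  using test_fn_measurable[OF assms(1)] unfolding damped_def[abs_def] by measurable

lemma Lp_integrable:
  assumes "1 \<le> p" and "Lp p \<Omega> f"
  shows "integrable (lebesgue_on \<Omega>) f"
proof (rule integrable_dominated)
  show "integrable (lebesgue_on \<Omega>) (\<lambda>x. 1 + \<bar>f x\<bar> powr p)"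
    using assms(2) by (simp add: Lp_def)
  show "AE x in lebesgue_on \<Omega>. \<bar>f x\<bar> \<le> 1 + \<bar>f x\<bar> powr p"
  proof (intro AE_I2)
    fix x
    show "\<bar>f x\<bar> \<le> 1 + \<bar>f x\<bar> powr p"
    proof (cases "\<bar>f x\<bar> \<le> 1")
      case False
      then have "\<bar>f x\<bar> powr 1 \<le> \<bar>f x\<bar> powr p"
        using assms(1) by (intro powr_mono) auto
      with False show ?thesis by simp
    qed (use powr_ge_zero[of "\<bar>f x\<bar>" p] in linarith)
  qed
qed (use assms(2) in \<open>simp add: Lp_def\<close>)

end

section \<open>The quasilinear problem\<close>

locale quasilinear_problem = bounded_open_set \<Omega> for \<Omega> :: "(real^'n::finite) set" +
  fixes A M :: "real^'n \<Rightarrow> real^'n^'n" and c h :: "real^'n \<Rightarrow> real" and \<theta> \<alpha> \<beta> :: real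
  assumes A_sym: "\<And>x. x \<in> \<Omega> \<Longrightarrow> transpose (A x) = A x"
    and coercivity_pos: "\<theta> > 0"
    and A_coercive: "\<And>x \<xi>. x \<in> \<Omega> \<Longrightarrow> \<theta> * (norm \<xi>)\<^sup>2 \<le> \<xi> \<bullet> (A x *v \<xi>)"
    and A_bounded: "\<And>x \<xi>. x \<in> \<Omega> \<Longrightarrow> norm (A x *v \<xi>) \<le> \<alpha> * norm \<xi>"
    and A_measurable: "\<And>i j. (\<lambda>x. A x $ i $ j) \<in> borel_measurable (lebesgue_on \<Omega>)"
    and M_sym: "\<And>x. x \<in> \<Omega> \<Longrightarrow> transpose (M x) = M x"
    and M_nonneg: "\<And>x \<xi>. x \<in> \<Omega> \<Longrightarrow> 0 \<le> \<xi> \<bullet> (M x *v \<xi>)"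
    and M_bounded: "\<And>x \<xi>. x \<in> \<Omega> \<Longrightarrow> norm (M x *v \<xi>) \<le> \<beta> * norm \<xi>"
    and M_measurable: "\<And>i j. (\<lambda>x. M x $ i $ j) \<in> borel_measurable (lebesgue_on \<Omega>)"
    and c_measurable: "c \<in> borel_measurable (lebesgue_on \<Omega>)"
    and pos_part_c_integrable: "integrable (lebesgue_on \<Omega>) (pos_part c)"
    and neg_part_c_zero: "AE x in lebesgue_on \<Omega>. neg_part c x = 0"
    and h_integrable: "integrable (lebesgue_on \<Omega>) h"
begin

declare c_measurable [measurable]

definition rhs :: "real \<Rightarrow> (real^'n \<Rightarrow> real) \<Rightarrow> (real^'n \<Rightarrow> real^'n) \<Rightarrow> real^'n \<Rightarrow> real" where
  "rhs lam u Du x = c_lam lam c x * u x + (M x *v Du x) \<bullet> Du x + h x"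

definition weak_equation :: "real \<Rightarrow> (real^'n \<Rightarrow> real) \<Rightarrow> (real^'n \<Rightarrow> real^'n) \<Rightarrow> bool" where
  "weak_equation lam u Du \<longleftrightarrow> (\<forall>\<psi>. test_fn \<Omega> \<psi> \<longrightarrow>
     (\<integral>x. (A x *v Du x) \<bullet> grad \<psi> x \<partial>lebesgue_on \<Omega>) = (\<integral>x. rhs lam u Du x * \<psi> x \<partial>lebesgue_on \<Omega>))"

lemma is_solution_iff:
  "is_solution \<Omega> A M c h lam u \<longleftrightarrow> Linfty \<Omega> u \<and> (\<exists>Du. H01 \<Omega> u Du \<and> weak_equation lam u Du)"
  by (simp add: is_solution_def weak_equation_def rhs_def)

lemma square_integrable_A:
  "square_integrable (lebesgue_on \<Omega>) f \<Longrightarrow> square_integrable (lebesgue_on \<Omega>) (\<lambda>x. A x *v f x)"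
  by (intro square_integrable_matrix_vector[where K = \<alpha>] A_measurable AE_lebesgue_onI)
    (simp add: A_bounded)

lemma square_integrable_M:
  "square_integrable (lebesgue_on \<Omega>) f \<Longrightarrow> square_integrable (lebesgue_on \<Omega>) (\<lambda>x. M x *v f x)"
  by (intro square_integrable_matrix_vector[where K = \<beta>] M_measurable AE_lebesgue_onI)
    (simp add: M_bounded)

lemma c_lam_eq: "AE x in lebesgue_on \<Omega>. c_lam lam c x = lam * pos_part c x"
  using neg_part_c_zero by eventually_elim (simp add: c_lam_def)

lemma integrable_rhs:
  assumes u: "u \<in> borel_measurable (lebesgue_on \<Omega>)" "AE x in lebesgue_on \<Omega>. \<bar>u x\<bar> \<le> C"
    and Du: "square_integrable (lebesgue_on \<Omega>) Du"
  shows "integrable (lebesgue_on \<Omega>) (rhs lam u Du)"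
proof -
  have [measurable]: "pos_part c \<in> borel_measurable (lebesgue_on \<Omega>)"
    using pos_part_c_integrable by simp
  have "integrable (lebesgue_on \<Omega>) (\<lambda>x. lam * pos_part c x * u x)"
  proof (rule integrable_dominated)
    show "integrable (lebesgue_on \<Omega>) (\<lambda>x. \<bar>lam\<bar> * C * pos_part c x)"
      using pos_part_c_integrable by simp
    show "AE x in lebesgue_on \<Omega>. \<bar>lam * pos_part c x * u x\<bar> \<le> \<bar>lam\<bar> * C * pos_part c x"
      using u(2)
    proof eventually_elim
      case (elim x)
      have "\<bar>u x\<bar> * pos_part c x \<le> C * pos_part c x"
        using elim by (intro mult_right_mono) (auto simp: pos_part_def)
      then have "\<bar>lam\<bar> * (\<bar>u x\<bar> * pos_part c x) \<le> \<bar>lam\<bar> * (C * pos_part c x)"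
        by (rule mult_left_mono) simp
      then show ?case
        by (simp add: abs_mult pos_part_def ac_simps)
    qed
  qed (use u in measurable)
  moreover have "integrable (lebesgue_on \<Omega>) (\<lambda>x. (M x *v Du x) \<bullet> Du x)"
    by (rule integrable_inner[OF square_integrable_M[OF Du] Du])
  ultimately have "integrable (lebesgue_on \<Omega>) (\<lambda>x. lam * pos_part c x * u x + (M x *v Du x) \<bullet> Du x + h x)"
    using h_integrable by simp
  moreover have "rhs lam u Du \<in> borel_measurable (lebesgue_on \<Omega>)"
  proof -
    have [measurable]: "Du \<in> borel_measurable (lebesgue_on \<Omega>)"
      "(\<lambda>x. M x *v Du x) \<in> borel_measurable (lebesgue_on \<Omega>)"
      "u \<in> borel_measurable (lebesgue_on \<Omega>)" "h \<in> borel_measurable (lebesgue_on \<Omega>)"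
      using Du square_integrable_M[OF Du] u h_integrable by (auto simp: square_integrable_def)
    show ?thesis
      unfolding rhs_def[abs_def] c_lam_def pos_part_def neg_part_def by measurable
  qed
  ultimately show ?thesis
    by (rule integrable_cong_AE_imp) (use c_lam_eq[of lam] in \<open>auto simp: rhs_def\<close>)
qed

lemma weak_equation_extends:
  assumes eq: "weak_equation lam u Du" and u: "Linfty \<Omega> u"
    and Du: "square_integrable (lebesgue_on \<Omega>) Du"
    and tests: "\<And>k. test_fn \<Omega> (\<psi>s k)" and bound: "\<And>k. AE x in lebesgue_on \<Omega>. \<bar>\<psi>s k x\<bar> \<le> B"
    and [measurable]: "\<psi> \<in> borel_measurable (lebesgue_on \<Omega>)"
    and lim: "AE x in lebesgue_on \<Omega>. (\<lambda>k. \<psi>s k x) \<longlonglongrightarrow> \<psi> x"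
    and grad_lim: "L2_tendsto (lebesgue_on \<Omega>) (\<lambda>k. grad (\<psi>s k)) D\<psi>"
    and D\<psi>: "square_integrable (lebesgue_on \<Omega>) D\<psi>"
  shows "(\<integral>x. (A x *v Du x) \<bullet> D\<psi> x \<partial>lebesgue_on \<Omega>) = (\<integral>x. rhs lam u Du x * \<psi> x \<partial>lebesgue_on \<Omega>)"
proof (rule integral_inner_eq_limit[OF square_integrable_A[OF Du] grad_lim D\<psi> _ _ _ lim bound])
  obtain C where [measurable]: "u \<in> borel_measurable (lebesgue_on \<Omega>)"
    and "AE x in lebesgue_on \<Omega>. \<bar>u x\<bar> \<le> C"
    using u by (auto simp: Linfty_def)
  then show "integrable (lebesgue_on \<Omega>) (rhs lam u Du)"
    using Du by (rule integrable_rhs)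
  show "(\<integral>x. (A x *v Du x) \<bullet> grad (\<psi>s k) x \<partial>lebesgue_on \<Omega>)
      = (\<integral>x. rhs lam u Du x * \<psi>s k x \<partial>lebesgue_on \<Omega>)" for k
    using eq tests by (simp add: weak_equation_def)
qed (use tests test_fn_measurable in auto)

text \<open>The natural test function \<open>\<phi>\<^sup>2 F(u - u\<^sub>0)\<close> is not smooth; it is the limit of the test
  functions \<open>\<phi>\<^sup>2 F(w\<^sub>k)\<close>, where the \<open>w\<^sub>k\<close> approximate \<open>u - u\<^sub>0\<close>.\<close>
lemma weak_equation_damped:
  assumes w: "weak_equation lam w Dw" "Linfty \<Omega> w" "H01 \<Omega> w Dw"
    and u: "H01 \<Omega> u Du" and u0: "H01 \<Omega> u0 Du0" and \<phi>: "test_fn \<Omega> \<phi>"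
  defines "v \<equiv> \<lambda>x. u x - u0 x" and "Dv \<equiv> \<lambda>x. Du x - Du0 x"
  shows "(\<integral>x. (A x *v Dw x) \<bullet> damped_grad \<phi> v Dv x \<partial>lebesgue_on \<Omega>)
      = (\<integral>x. rhs lam w Dw x * damped \<phi> v x \<partial>lebesgue_on \<Omega>)"
proof -
  obtain ws where ws_smooth: "\<And>k. smooth_fn (ws k)"
    and ws_lim: "AE x in lebesgue_on \<Omega>. (\<lambda>k. ws k x) \<longlonglongrightarrow> v x"
    and ws_grad: "L2_tendsto (lebesgue_on \<Omega>) (\<lambda>k. grad (ws k)) Dv"
    using H01_difference_approximation[OF u u0] unfolding v_def Dv_def by blast
  have Du: "square_integrable (lebesgue_on \<Omega>) Du" and Du0: "square_integrable (lebesgue_on \<Omega>) Du0"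
    and Dw: "square_integrable (lebesgue_on \<Omega>) Dw"
    using H01_approximation[OF u] H01_approximation[OF u0] H01_approximation[OF w(3)] by blast+
  have [measurable]: "u \<in> borel_measurable (lebesgue_on \<Omega>)" "u0 \<in> borel_measurable (lebesgue_on \<Omega>)"
    using u u0 by (auto simp: H01_def)
  have v_meas [measurable]: "v \<in> borel_measurable (lebesgue_on \<Omega>)"
    unfolding v_def by measurable
  have Dv: "square_integrable (lebesgue_on \<Omega>) Dv"
    unfolding Dv_def using Du Du0 by (rule square_integrable_diff)
  obtain B where B: "\<And>x. x \<in> \<Omega> \<Longrightarrow> \<bar>\<phi> x\<bar> \<le> B"
    using test_fn_bounded[OF \<phi>] by blast
  have cont: "isCont damping t" for t
    using continuous_on_damping by (simp add: continuous_on_eq_continuous_at)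
  show ?thesis
  proof (rule weak_equation_extends[OF w(1,2) Dw])
    show "test_fn \<Omega> (damped \<phi> (ws k))" for k
      using test_fn_damped[OF \<phi> ws_smooth] .
    show "AE x in lebesgue_on \<Omega>. \<bar>damped \<phi> (ws k) x\<bar> \<le> B\<^sup>2" for k
      using B by (rule AE_abs_damped_le)
    show "AE x in lebesgue_on \<Omega>. (\<lambda>k. damped \<phi> (ws k) x) \<longlonglongrightarrow> damped \<phi> v x"
      using ws_lim by eventually_elim (auto simp: damped_def intro!: tendsto_intros isCont_tendsto_compose[OF cont])
    show "damped \<phi> v \<in> borel_measurable (lebesgue_on \<Omega>)"
      using \<phi> v_meas by (rule damped_measurable)
    show "L2_tendsto (lebesgue_on \<Omega>) (\<lambda>k. grad (damped \<phi> (ws k))) (damped_grad \<phi> v Dv)"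
      using damped_grad_tendsto[OF \<phi> ws_smooth v_meas ws_lim ws_grad Dv] .
    show "square_integrable (lebesgue_on \<Omega>) (damped_grad \<phi> v Dv)"
      using square_integrable_damped_grad[OF \<phi> v_meas Dv] .
  qed
qed

definition energy_bound :: "(real^'n \<Rightarrow> real) \<Rightarrow> (real^'n \<Rightarrow> real^'n) \<Rightarrow> real^'n \<Rightarrow> real" where
  "energy_bound \<phi> Du0 x = (2 * norm (A x *v grad \<phi> x) + 2 * \<bar>\<phi> x\<bar> * norm (M x *v Du0 x))\<^sup>2 / (4 * \<theta>)"

lemma energy_bound_nonneg: "0 \<le> energy_bound \<phi> Du0 x"
  using coercivity_pos by (simp add: energy_bound_def)

lemma integrable_energy_bound:
  assumes \<phi>: "test_fn \<Omega> \<phi>" and Du0: "square_integrable (lebesgue_on \<Omega>) Du0"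
  shows "integrable (lebesgue_on \<Omega>) (energy_bound \<phi> Du0)"
proof -
  obtain B where B: "\<And>x. x \<in> \<Omega> \<Longrightarrow> \<bar>\<phi> x\<bar> \<le> B"
    using test_fn_bounded[OF \<phi>] by blast
  have AD: "square_integrable (lebesgue_on \<Omega>) (\<lambda>x. A x *v grad \<phi> x)"
    and MD: "square_integrable (lebesgue_on \<Omega>) (\<lambda>x. M x *v Du0 x)"
    using square_integrable_A[OF square_integrable_grad_test_fn[OF \<phi>]] square_integrable_M[OF Du0] .
  have [measurable]: "\<phi> \<in> borel_measurable (lebesgue_on \<Omega>)"
    "(\<lambda>x. A x *v grad \<phi> x) \<in> borel_measurable (lebesgue_on \<Omega>)"
    "(\<lambda>x. M x *v Du0 x) \<in> borel_measurable (lebesgue_on \<Omega>)"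
    using test_fn_measurable[OF \<phi>] AD MD by (simp_all add: square_integrable_def)
  show ?thesis
    unfolding energy_bound_def
  proof (rule integrable_dominated)
    show "integrable (lebesgue_on \<Omega>)
        (\<lambda>x. (8 * (norm (A x *v grad \<phi> x))\<^sup>2 + 8 * B\<^sup>2 * (norm (M x *v Du0 x))\<^sup>2) / (4 * \<theta>))"
      using AD MD by (simp add: square_integrable_def)
    show "AE x in lebesgue_on \<Omega>. \<bar>(2 * norm (A x *v grad \<phi> x) + 2 * \<bar>\<phi> x\<bar> * norm (M x *v Du0 x))\<^sup>2 / (4 * \<theta>)\<bar>
        \<le> (8 * (norm (A x *v grad \<phi> x))\<^sup>2 + 8 * B\<^sup>2 * (norm (M x *v Du0 x))\<^sup>2) / (4 * \<theta>)"
    proof (rule AE_lebesgue_onI)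
      fix x assume x: "x \<in> \<Omega>"
      have "(\<phi> x)\<^sup>2 \<le> B\<^sup>2"
        using B[OF x] by (metis abs_ge_zero power2_abs power_mono)
      then have "(\<phi> x)\<^sup>2 * (norm (M x *v Du0 x))\<^sup>2 \<le> B\<^sup>2 * (norm (M x *v Du0 x))\<^sup>2"
        by (rule mult_right_mono) simp
      then have "(2 * norm (A x *v grad \<phi> x) + 2 * \<bar>\<phi> x\<bar> * norm (M x *v Du0 x))\<^sup>2
          \<le> 8 * (norm (A x *v grad \<phi> x))\<^sup>2 + 8 * B\<^sup>2 * (norm (M x *v Du0 x))\<^sup>2"
        using norm_add_square_le[of "2 * norm (A x *v grad \<phi> x)" "2 * \<bar>\<phi> x\<bar> * norm (M x *v Du0 x)"]
        by (simp add: power_mult_distrib)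
      then show "\<bar>(2 * norm (A x *v grad \<phi> x) + 2 * \<bar>\<phi> x\<bar> * norm (M x *v Du0 x))\<^sup>2 / (4 * \<theta>)\<bar>
        \<le> (8 * (norm (A x *v grad \<phi> x))\<^sup>2 + 8 * B\<^sup>2 * (norm (M x *v Du0 x))\<^sup>2) / (4 * \<theta>)"
        using coercivity_pos by (simp add: divide_right_mono)
    qed
  qed measurable
qed

lemma rhs_difference_ge:
  assumes "x \<in> \<Omega>" and "neg_part c x = 0" and "0 \<le> \<psi>"
  shows "lam * (pos_part c x * u x * \<psi>)
    \<le> (rhs lam u Du x - rhs 0 u0 Du0 x) * \<psi> - 2 * ((M x *v Du0 x) \<bullet> (Du x - Du0 x)) * \<psi>"
proof -
  have diff: "rhs lam u Du x - rhs 0 u0 Du0 x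
      = lam * pos_part c x * u x + (M x *v (Du x - Du0 x)) \<bullet> (Du x - Du0 x)
        + 2 * ((M x *v Du0 x) \<bullet> (Du x - Du0 x))"
    using assms(2) quadratic_form_diff[OF M_sym[OF assms(1)], of "Du x" "Du0 x"]
    by (simp add: rhs_def c_lam_def)
  have "0 \<le> (M x *v (Du x - Du0 x)) \<bullet> (Du x - Du0 x) * \<psi>"
    using M_nonneg[OF assms(1), of "Du x - Du0 x"] assms(3) by (simp add: inner_commute)
  then show ?thesis
    unfolding diff by (simp add: algebra_simps)
qed

lemma damped_energy_inequality:
  fixes u u0 \<phi> :: "real^'n \<Rightarrow> real" and Du Du0 :: "real^'n \<Rightarrow> real^'n"
  assumes x: "x \<in> \<Omega>" and "neg_part c x = 0" and "u0 x \<le> u x"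
  defines "v \<equiv> \<lambda>x. u x - u0 x" and "Dv \<equiv> \<lambda>x. Du x - Du0 x"
  shows "lam * (pos_part c x * u x * damped \<phi> v x)
    \<le> (rhs lam u Du x - rhs 0 u0 Du0 x) * damped \<phi> v x - (A x *v Dv x) \<bullet> damped_grad \<phi> v Dv x
      + energy_bound \<phi> Du0 x"
proof -
  have "damping_deriv (v x) \<le> - (damping (v x))\<^sup>2"
    using assms(3) by (intro damping_deriv_le) (simp add: v_def)
  from damped_energy_density_le[OF A_sym[OF x] coercivity_pos A_coercive[OF x] damping_pos this,
      where a = "Dv x" and g = "grad \<phi> x" and p = "\<phi> x" and N = "M x" and d = "Du0 x"]
  have "(A x *v Dv x) \<bullet> damped_grad \<phi> v Dv x - 2 * ((M x *v Du0 x) \<bullet> Dv x) * damped \<phi> v x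
      \<le> energy_bound \<phi> Du0 x"
    by (simp add: damped_grad_def damped_def energy_bound_def ac_simps)
  moreover note rhs_difference_ge[OF x assms(2) damped_nonneg[of \<phi> v x], of lam u Du u0 Du0]
  ultimately show ?thesis
    unfolding Dv_def by linarith
qed

lemma integrable_rhs_damped:
  assumes w: "Linfty \<Omega> w" and Dw: "square_integrable (lebesgue_on \<Omega>) Dw"
    and \<phi>: "test_fn \<Omega> \<phi>" and v: "v \<in> borel_measurable (lebesgue_on \<Omega>)"
  shows "integrable (lebesgue_on \<Omega>) (\<lambda>x. rhs lam w Dw x * damped \<phi> v x)"
proof -
  obtain C where "w \<in> borel_measurable (lebesgue_on \<Omega>)" "AE x in lebesgue_on \<Omega>. \<bar>w x\<bar> \<le> C"
    using w by (auto simp: Linfty_def)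
  moreover obtain B where "\<And>x. x \<in> \<Omega> \<Longrightarrow> \<bar>\<phi> x\<bar> \<le> B"
    using test_fn_bounded[OF \<phi>] by blast
  ultimately show ?thesis
    using integrable_rhs Dw damped_measurable[OF \<phi> v]
    by (intro integrable_mult_bounded[OF _ _ AE_abs_damped_le]) auto
qed

lemma integrable_pos_part_mult_damped:
  assumes u: "Linfty \<Omega> u" and \<phi>: "test_fn \<Omega> \<phi>" and v: "v \<in> borel_measurable (lebesgue_on \<Omega>)"
  shows "integrable (lebesgue_on \<Omega>) (\<lambda>x. pos_part c x * u x * damped \<phi> v x)"
proof -
  obtain C where [measurable]: "u \<in> borel_measurable (lebesgue_on \<Omega>)"
    and u_bound: "AE x in lebesgue_on \<Omega>. \<bar>u x\<bar> \<le> C"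
    using u by (auto simp: Linfty_def)
  obtain B where "\<And>x. x \<in> \<Omega> \<Longrightarrow> \<bar>\<phi> x\<bar> \<le> B"
    using test_fn_bounded[OF \<phi>] by blast
  then have "AE x in lebesgue_on \<Omega>. \<bar>damped \<phi> v x\<bar> \<le> B\<^sup>2"
    by (rule AE_abs_damped_le)
  with u_bound have "AE x in lebesgue_on \<Omega>. \<bar>u x * damped \<phi> v x\<bar> \<le> C * B\<^sup>2"
    by eventually_elim (simp add: abs_mult mult_mono)
  from integrable_mult_bounded[OF pos_part_c_integrable _ this] show ?thesis
    using damped_measurable[OF \<phi> v] by (simp add: mult.assoc)
qed

lemma weak_equations_difference:
  assumes u0: "H01 \<Omega> u0 Du0" "Linfty \<Omega> u0" "weak_equation 0 u0 Du0"
    and u: "H01 \<Omega> u Du" "Linfty \<Omega> u" "weak_equation lam u Du" and \<phi>: "test_fn \<Omega> \<phi>"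
  defines "v \<equiv> \<lambda>x. u x - u0 x" and "Dv \<equiv> \<lambda>x. Du x - Du0 x"
  shows "(\<integral>x. (A x *v Dv x) \<bullet> damped_grad \<phi> v Dv x \<partial>lebesgue_on \<Omega>)
    = (\<integral>x. (rhs lam u Du x - rhs 0 u0 Du0 x) * damped \<phi> v x \<partial>lebesgue_on \<Omega>)"
proof -
  have Du0: "square_integrable (lebesgue_on \<Omega>) Du0" and Du: "square_integrable (lebesgue_on \<Omega>) Du"
    using H01_approximation[OF u0(1)] H01_approximation[OF u(1)] by blast+
  have "u \<in> borel_measurable (lebesgue_on \<Omega>)" "u0 \<in> borel_measurable (lebesgue_on \<Omega>)"
    using u(1) u0(1) by (auto simp: H01_def)
  then have v: "v \<in> borel_measurable (lebesgue_on \<Omega>)"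
    unfolding v_def by measurable
  have D\<psi>: "square_integrable (lebesgue_on \<Omega>) (damped_grad \<phi> v Dv)"
    unfolding Dv_def by (intro square_integrable_damped_grad square_integrable_diff \<phi> v Du Du0)
  have "(\<integral>x. (A x *v Dv x) \<bullet> damped_grad \<phi> v Dv x \<partial>lebesgue_on \<Omega>)
      = (\<integral>x. (A x *v Du x) \<bullet> damped_grad \<phi> v Dv x \<partial>lebesgue_on \<Omega>)
        - (\<integral>x. (A x *v Du0 x) \<bullet> damped_grad \<phi> v Dv x \<partial>lebesgue_on \<Omega>)"
    using integrable_inner[OF square_integrable_A[OF Du] D\<psi>] integrable_inner[OF square_integrable_A[OF Du0] D\<psi>]
    by (simp add: Dv_def matrix_vector_mult_diff_distrib inner_diff_left)
  also have "\<dots> = (\<integral>x. rhs lam u Du x * damped \<phi> v x \<partial>lebesgue_on \<Omega>)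
      - (\<integral>x. rhs 0 u0 Du0 x * damped \<phi> v x \<partial>lebesgue_on \<Omega>)"
    using weak_equation_damped[OF u(3,2,1) u(1) u0(1) \<phi>] weak_equation_damped[OF u0(3,2,1) u(1) u0(1) \<phi>]
    by (simp add: v_def Dv_def)
  also have "\<dots> = (\<integral>x. (rhs lam u Du x - rhs 0 u0 Du0 x) * damped \<phi> v x \<partial>lebesgue_on \<Omega>)"
    using integrable_rhs_damped[OF u(2) Du \<phi> v] integrable_rhs_damped[OF u0(2) Du0 \<phi> v]
    by (simp add: left_diff_distrib)
  finally show ?thesis .
qed

lemma energy_estimate:
  assumes u0: "H01 \<Omega> u0 Du0" "Linfty \<Omega> u0" "weak_equation 0 u0 Du0"
    and u: "H01 \<Omega> u Du" "Linfty \<Omega> u" "weak_equation lam u Du"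
    and above: "AE x in lebesgue_on \<Omega>. u0 x \<le> u x" and \<phi>: "test_fn \<Omega> \<phi>"
  defines "v \<equiv> \<lambda>x. u x - u0 x"
  shows "lam * (\<integral>x. pos_part c x * u x * damped \<phi> v x \<partial>lebesgue_on \<Omega>)
    \<le> (\<integral>x. energy_bound \<phi> Du0 x \<partial>lebesgue_on \<Omega>)"
proof -
  define Dv where "Dv x = Du x - Du0 x" for x
  define R where "R x = (rhs lam u Du x - rhs 0 u0 Du0 x) * damped \<phi> v x" for x
  define E where "E x = (A x *v Dv x) \<bullet> damped_grad \<phi> v Dv x" for x
  have Du0: "square_integrable (lebesgue_on \<Omega>) Du0" and Du: "square_integrable (lebesgue_on \<Omega>) Du"
    using H01_approximation[OF u0(1)] H01_approximation[OF u(1)] by blast+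
  have "u \<in> borel_measurable (lebesgue_on \<Omega>)" "u0 \<in> borel_measurable (lebesgue_on \<Omega>)"
    using u(1) u0(1) by (auto simp: H01_def)
  then have v: "v \<in> borel_measurable (lebesgue_on \<Omega>)"
    unfolding v_def by measurable
  have int_R: "integrable (lebesgue_on \<Omega>) R"
    unfolding R_def left_diff_distrib
    by (intro Bochner_Integration.integrable_diff integrable_rhs_damped u(2) u0(2) Du Du0 \<phi> v)
  have int_E: "integrable (lebesgue_on \<Omega>) E"
    unfolding E_def Dv_def
    by (intro integrable_inner square_integrable_A square_integrable_damped_grad square_integrable_diff
        \<phi> v Du Du0)
  note int_bound = integrable_energy_bound[OF \<phi> Du0]
  have "AE x in lebesgue_on \<Omega>. lam * (pos_part c x * u x * damped \<phi> v x) \<le> R x - E x + energy_bound \<phi> Du0 x"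
    using neg_part_c_zero above AE_space
  proof eventually_elim
    case (elim x)
    then show ?case
      using damped_energy_inequality[of x u0 u lam \<phi> Du Du0]
      by (simp add: R_def E_def Dv_def[abs_def] v_def)
  qed
  then have "lam * (\<integral>x. pos_part c x * u x * damped \<phi> v x \<partial>lebesgue_on \<Omega>)
      \<le> (\<integral>x. R x - E x + energy_bound \<phi> Du0 x \<partial>lebesgue_on \<Omega>)"
    using integrable_pos_part_mult_damped[OF u(2) \<phi> v] int_R int_E int_bound
    by (subst integral_mult_right_zero[symmetric]) (intro integral_mono_AE; simp)
  also have "\<dots> = (\<integral>x. R x \<partial>lebesgue_on \<Omega>) - (\<integral>x. E x \<partial>lebesgue_on \<Omega>)
      + (\<integral>x. energy_bound \<phi> Du0 x \<partial>lebesgue_on \<Omega>)"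
    using int_R int_E int_bound by simp
  also have "\<dots> = (\<integral>x. energy_bound \<phi> Du0 x \<partial>lebesgue_on \<Omega>)"
    using weak_equations_difference[OF u0 u \<phi>] by (simp add: R_def E_def Dv_def[abs_def] v_def)
  finally show ?thesis .
qed

text \<open>Truncating \<open>u\<^sub>0\<^sup>+\<close> at \<open>1\<close> keeps the weight below \<open>c\<^sup>+\<close>, hence integrable, while it still bounds
  \<open>2 c\<^sup>+ u F(u - u\<^sub>0)\<close> from below.\<close>
definition weight :: "(real^'n \<Rightarrow> real) \<Rightarrow> real^'n \<Rightarrow> real" where
  "weight u0 x = pos_part c x * min 1 (max (u0 x) 0)"

lemma integrable_weight:
  assumes "u0 \<in> borel_measurable (lebesgue_on \<Omega>)"
  shows "integrable (lebesgue_on \<Omega>) (weight u0)"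
  unfolding weight_def[abs_def]
  by (rule integrable_mult_bounded[OF pos_part_c_integrable, where B = 1]) (use assms in \<open>auto intro!: AE_I2\<close>)

lemma exists_test_fn_weight_pos:
  assumes u0: "H01 \<Omega> u0 Du0"
    and nonneg: "AE x in lebesgue_on \<Omega>. pos_part c x * u0 x \<ge> 0"
    and nonzero: "\<not> (AE x in lebesgue_on \<Omega>. pos_part c x * u0 x = 0)"
  obtains \<phi> where "test_fn \<Omega> \<phi>" and "0 < (\<integral>x. (\<phi> x)\<^sup>2 * weight u0 x \<partial>lebesgue_on \<Omega>)"
proof -
  obtain \<phi>s where tests: "\<And>k. test_fn \<Omega> (\<phi>s k)" and conv: "L2_tendsto (lebesgue_on \<Omega>) \<phi>s u0"
    using H01_approximation[OF u0] by blast
  have "\<not> (AE x in lebesgue_on \<Omega>. u0 x * weight u0 x = 0)"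
  proof
    assume "AE x in lebesgue_on \<Omega>. u0 x * weight u0 x = 0"
    with nonneg have "AE x in lebesgue_on \<Omega>. pos_part c x * u0 x = 0"
      by eventually_elim (auto simp: weight_def pos_part_def min_def max_def zero_le_mult_iff split: if_splits)
    with nonzero show False ..
  qed
  moreover have "AE x in lebesgue_on \<Omega>. 0 \<le> weight u0 x"
    by (simp add: weight_def pos_part_def)
  moreover have "integrable (lebesgue_on \<Omega>) (weight u0)"
    using u0 by (intro integrable_weight) (simp add: H01_def)
  ultimately obtain k where "0 < (\<integral>x. (\<phi>s k x)\<^sup>2 * weight u0 x \<partial>lebesgue_on \<Omega>)"
    using exists_approximant_integral_pos[OF conv tests] by blast
  then show thesis
    by (rule that[OF tests])
qed

lemma weight_le_damped:
  assumes nonneg: "AE x in lebesgue_on \<Omega>. pos_part c x * u0 x \<ge> 0"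
    and above: "AE x in lebesgue_on \<Omega>. u0 x \<le> u x" and \<phi>: "test_fn \<Omega> \<phi>"
    and [measurable]: "u0 \<in> borel_measurable (lebesgue_on \<Omega>)" and u: "Linfty \<Omega> u"
  shows "(\<integral>x. (\<phi> x)\<^sup>2 * weight u0 x \<partial>lebesgue_on \<Omega>) / 2
    \<le> (\<integral>x. pos_part c x * u x * damped \<phi> (\<lambda>x. u x - u0 x) x \<partial>lebesgue_on \<Omega>)"
  unfolding integral_divide_zero[symmetric]
proof (rule integral_mono_AE)
  have [measurable]: "u \<in> borel_measurable (lebesgue_on \<Omega>)"
    using u by (simp add: Linfty_def)
  show "integrable (lebesgue_on \<Omega>) (\<lambda>x. pos_part c x * u x * damped \<phi> (\<lambda>x. u x - u0 x) x)"
    by (rule integrable_pos_part_mult_damped[OF u \<phi>]) measurable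
  show "integrable (lebesgue_on \<Omega>) (\<lambda>x. (\<phi> x)\<^sup>2 * weight u0 x / 2)"
    using integrable_test_fn_square_mult[OF \<phi> integrable_weight] by simp
  show "AE x in lebesgue_on \<Omega>. (\<phi> x)\<^sup>2 * weight u0 x / 2 \<le> pos_part c x * u x * damped \<phi> (\<lambda>x. u x - u0 x) x"
    using nonneg above
  proof eventually_elim
    case (elim x)
    have "weight u0 x / 2 \<le> pos_part c x * (u x * damping (u x - u0 x))"
      unfolding weight_def using elim by (intro min_le_mult_damping) (auto simp: pos_part_def)
    from mult_left_mono[OF this zero_le_power2[of "\<phi> x"]] show ?case
      by (simp add: damped_def ac_simps)
  qed
qed

lemma no_solution_above:
  assumes u0: "H01 \<Omega> u0 Du0" "Linfty \<Omega> u0" "weak_equation 0 u0 Du0"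
    and nonneg: "AE x in lebesgue_on \<Omega>. pos_part c x * u0 x \<ge> 0"
    and nonzero: "\<not> (AE x in lebesgue_on \<Omega>. pos_part c x * u0 x = 0)"
  shows "\<exists>lambar>0. \<forall>lam\<ge>lambar. \<not> (\<exists>u. is_solution \<Omega> A M c h lam u
    \<and> (AE x in lebesgue_on \<Omega>. u x \<ge> u0 x))"
proof -
  obtain \<phi> where \<phi>: "test_fn \<Omega> \<phi>" and I_pos: "0 < (\<integral>x. (\<phi> x)\<^sup>2 * weight u0 x \<partial>lebesgue_on \<Omega>)"
    using exists_test_fn_weight_pos[OF u0(1) nonneg nonzero] by blast
  define I where "I = (\<integral>x. (\<phi> x)\<^sup>2 * weight u0 x \<partial>lebesgue_on \<Omega>)"
  define C where "C = (\<integral>x. energy_bound \<phi> Du0 x \<partial>lebesgue_on \<Omega>)"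
  have I: "0 < I" and C: "0 \<le> C"
    using I_pos energy_bound_nonneg by (simp_all add: I_def C_def)
  have "\<not> (\<exists>u. is_solution \<Omega> A M c h lam u \<and> (AE x in lebesgue_on \<Omega>. u x \<ge> u0 x))"
    if lam: "2 * C / I + 1 \<le> lam" for lam
  proof
    assume "\<exists>u. is_solution \<Omega> A M c h lam u \<and> (AE x in lebesgue_on \<Omega>. u x \<ge> u0 x)"
    then obtain u Du where u: "H01 \<Omega> u Du" "Linfty \<Omega> u" "weak_equation lam u Du"
      and above: "AE x in lebesgue_on \<Omega>. u0 x \<le> u x"
      by (auto simp: is_solution_iff)
    define J where "J = (\<integral>x. pos_part c x * u x * damped \<phi> (\<lambda>x. u x - u0 x) x \<partial>lebesgue_on \<Omega>)"
    have "u0 \<in> borel_measurable (lebesgue_on \<Omega>)"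
      using u0(1) by (simp add: H01_def)
    with weight_le_damped[OF nonneg above \<phi>] have "I / 2 \<le> J"
      using u(2) unfolding I_def J_def by simp
    moreover have "lam * J \<le> C"
      using energy_estimate[OF u0 u above \<phi>] by (simp add: J_def C_def)
    moreover have "0 < lam"
      using lam I C by (smt (verit) divide_nonneg_pos)
    ultimately have "lam * (I / 2) \<le> C"
      by (smt (verit) mult_left_mono)
    moreover have "(2 * C / I + 1) * (I / 2) \<le> lam * (I / 2)"
      using lam I by (intro mult_right_mono) auto
    moreover have "(2 * C / I + 1) * (I / 2) = C + I / 2"
      using I by (simp add: field_simps)
    ultimately show False
      using I by linarith
  qed
  moreover have "0 < 2 * C / I + 1"
    using I C by (simp add: add_nonneg_pos)
  ultimately show ?thesis
    by blast
qed

end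

lemma quasilinear_problemI:
  fixes \<Omega> :: "(real^'n::finite) set" and A M :: "real^'n \<Rightarrow> real^'n^'n" and c h :: "real^'n \<Rightarrow> real"
  assumes "open \<Omega>" and "bounded \<Omega>"
    and A_sym: "\<And>x. x \<in> closure \<Omega> \<Longrightarrow> sym_matrix (A x)"
    and A_dini: "\<And>i j. dini_continuous_on (closure \<Omega>) (\<lambda>x. A x $ i $ j)"
    and A_ell: "\<theta> > 0" "\<And>x \<xi>. x \<in> \<Omega> \<Longrightarrow>
        \<theta> * (norm \<xi>)\<^sup>2 \<le> \<xi> \<bullet> (A x *v \<xi>) \<and> \<xi> \<bullet> (A x *v \<xi>) \<le> (1 / \<theta>) * (norm \<xi>)\<^sup>2"
    and M_meas: "\<And>i j. (\<lambda>x. M x $ i $ j) \<in> borel_measurable (lebesgue_on \<Omega>)"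
    and M_sym: "\<And>x. x \<in> \<Omega> \<Longrightarrow> sym_matrix (M x)"
    and M_bds: "0 < \<mu>1" "\<And>x \<xi>. x \<in> \<Omega> \<Longrightarrow>
        \<mu>1 * (norm \<xi>)\<^sup>2 \<le> \<xi> \<bullet> (M x *v \<xi>) \<and> \<xi> \<bullet> (M x *v \<xi>) \<le> \<mu>2 * (norm \<xi>)\<^sup>2"
    and p: "1 \<le> p" and c: "Lp p \<Omega> c" and h: "Lp p \<Omega> h"
    and c_neg: "AE x in lebesgue_on \<Omega>. neg_part c x = 0"
  shows "quasilinear_problem \<Omega> A M c h \<theta> (1 / \<theta>) \<mu>2"
proof -
  interpret bounded_open_set \<Omega>
    using assms(1,2) by unfold_locales
  have c_meas [measurable]: "c \<in> borel_measurable (lebesgue_on \<Omega>)"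
    using c by (simp add: Lp_def)
  have A_sym': "transpose (A x) = A x" if "x \<in> \<Omega>" for x
    using A_sym[of x] that closure_subset unfolding sym_matrix_def by blast
  have M_sym': "transpose (M x) = M x" if "x \<in> \<Omega>" for x
    using M_sym[OF that] by (simp add: sym_matrix_def)
  have A_meas: "(\<lambda>x. A x $ i $ j) \<in> borel_measurable (lebesgue_on \<Omega>)" for i j
  proof (rule continuous_imp_measurable_on_sets_lebesgue)
    have "continuous_on (closure \<Omega>) (\<lambda>x. A x $ i $ j)"
      using A_dini[of i j] by (simp add: dini_continuous_on_def)
    then show "continuous_on \<Omega> (\<lambda>x. A x $ i $ j)"
      by (rule continuous_on_subset) (rule closure_subset)
  qed (use lmeasurable in auto)
  show ?thesis
  proof unfold_locales
    show "norm (A x *v \<xi>) \<le> 1 / \<theta> * norm \<xi>" if "x \<in> \<Omega>" for x \<xi>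
      using A_ell(1) A_ell(2)[OF that]
      by (intro norm_matrix_vector_le_of_bounds[where l = \<theta>] A_sym'[OF that]) auto
    show "norm (M x *v \<xi>) \<le> \<mu>2 * norm \<xi>" if "x \<in> \<Omega>" for x \<xi>
      using M_bds(1) M_bds(2)[OF that]
      by (intro norm_matrix_vector_le_of_bounds[where l = \<mu>1] M_sym'[OF that]) auto
    show "0 \<le> \<xi> \<bullet> (M x *v \<xi>)" if "x \<in> \<Omega>" for x \<xi>
      using M_bds(2)[OF that, of \<xi>] M_bds(1) by (meson less_imp_le mult_nonneg_nonneg order_trans zero_le_power2)
    show "integrable (lebesgue_on \<Omega>) (pos_part c)"
      using Lp_integrable[OF p c] by (simp add: pos_part_def[abs_def])
    show "integrable (lebesgue_on \<Omega>) h"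
      using Lp_integrable[OF p h] .
  qed (use A_sym' M_sym' A_meas M_meas A_ell c_meas c_neg in auto)
qed

theorem lemma4p2:
  fixes \<Omega> :: "(real^'n) set"
    and A M :: "real^'n \<Rightarrow> real^'n^'n"
    and c h u0 :: "real^'n \<Rightarrow> real"
    and \<theta> \<mu>1 \<mu>2 p :: real
  assumes dim: "CARD('n) \<ge> 3"
    and dom: "open \<Omega>" "connected \<Omega>" "bounded \<Omega>" "\<Omega> \<noteq> {}"
    and bdry: "C1_dini_boundary \<Omega>"
    and A_sym: "\<And>x. x \<in> closure \<Omega> \<Longrightarrow> sym_matrix (A x)"
    and A_dini: "\<And>i j. dini_continuous_on (closure \<Omega>) (\<lambda>x. A x $ i $ j)"
    and A_ell: "\<theta> > 0" "\<And>x \<xi>. x \<in> \<Omega> \<Longrightarrow>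
        \<theta> * (norm \<xi>)\<^sup>2 \<le> \<xi> \<bullet> (A x *v \<xi>) \<and> \<xi> \<bullet> (A x *v \<xi>) \<le> (1 / \<theta>) * (norm \<xi>)\<^sup>2"
    and M_meas: "\<And>i j. (\<lambda>x. M x $ i $ j) \<in> borel_measurable (lebesgue_on \<Omega>)"
    and M_sym: "\<And>x. x \<in> \<Omega> \<Longrightarrow> sym_matrix (M x)"
    and M_bds: "0 < \<mu>1" "\<And>x \<xi>. x \<in> \<Omega> \<Longrightarrow>
        \<mu>1 * (norm \<xi>)\<^sup>2 \<le> \<xi> \<bullet> (M x *v \<xi>) \<and> \<xi> \<bullet> (M x *v \<xi>) \<le> \<mu>2 * (norm \<xi>)\<^sup>2"
    and p: "p > real CARD('n)"
    and c_Lp: "Lp p \<Omega> c" and h_Lp: "Lp p \<Omega> h"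
    and Acp: "hyp_Ac_plus \<Omega> c"
    and cminus: "AE x in lebesgue_on \<Omega>. neg_part c x = 0"
    and u0_sol: "is_solution \<Omega> A M c h 0 u0"
    and cu0_nonneg: "AE x in lebesgue_on \<Omega>. pos_part c x * u0 x \<ge> 0"
    and cu0_nonzero: "\<not> (AE x in lebesgue_on \<Omega>. pos_part c x * u0 x = 0)"
  shows "\<exists>lambar>0. \<forall>lam\<ge>lambar. \<not> (\<exists>u. is_solution \<Omega> A M c h lam u
                                    \<and> (AE x in lebesgue_on \<Omega>. u x \<ge> u0 x))"
proof -
  have "real CARD('n) \<ge> 3"
    using dim by simp
  with p have "1 \<le> p"
    by linarith
  then interpret quasilinear_problem \<Omega> A M c h \<theta> "1 / \<theta>" \<mu>2
    using quasilinear_problemI[OF dom(1,3) A_sym A_dini A_ell M_meas M_sym M_bds _ c_Lp h_Lp cminus]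
    by blast
  obtain Du0 where "H01 \<Omega> u0 Du0" "Linfty \<Omega> u0" "weak_equation 0 u0 Du0"
    using u0_sol by (auto simp: is_solution_iff)
  then show ?thesis
    using cu0_nonneg cu0_nonzero by (rule no_solution_above)
qed

end
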